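(* Assume $p_n\to0$, and let $(k_n)_n\subset\mathbb N$ be a sequence of integers with $k_n\to\infty$ and $k_np_n\to0$ as $n\to\infty$. Then for each $n$ there exists an event $E_n$ (depending on $n,p_n,k_n$), with $\mathbb P(E_n)\to1$ as $n\to\infty$, on which the following hold for the system with clone probability $p=p_n$: (a) $\tau_{k_n}=b_{k_n}^{(p_n)}\le (\ln k_n)^2$; (b) $(1-k_n^{-1/3})k_ne^t\le Z(\tau_{k_n}+t)\le (1+k_n^{-1/3})k_ne^t$ for all $t\ge0$; (c) $(1-3k_n^{-1/3})k_ne^t\le T^{(p_n)}(b_{k_n}^{(p_n)}+t)\le(1+3k_n^{-1/3})k_ne^t$ for all $t\ge0$.
   Context: Let $p\in[0,1]$. Let $Z=(Z(t))_{t\ge0}$ be a standard Yule process: a continuous-time pure birth process started from $Z(0)=1$ in which each individual gives birth at rate $1$. Each newborn child is, independently of everything else, a clone of its parent (same genetic type) with probability $p$, and a mutant carrying a new genetic type with probability $1-p$. The ancestor has type $1$ and the successive mutants receive types $2,3,\dots$ in order of birth. Let $b_1^{(p)}=0$ and, for $i\ge2$, let $b_i^{(p)}$ be the birth time of the first individual of type $i$ (i.e. of the $(i-1)$-th mutant). Let $T^{(p)}(t)=\max\{i: b_i^{(p)}\le t\}$ be the number of distinct types present at time $t$. For $i\in\mathbb N$, $\tau_i=\inf\{t\ge0:Z(t)=i\}$ is the birth time of the $i$-th individual. *)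

theory Defs
  imports "HOL-Probability.Probability"
begin

text \<open>Yule process with clonal/mutant births, built from its jump chain.
  H j (j \<ge> 1) is the holding time in state Z = j (an Exp(j) variable);
  C k (k \<ge> 2) is the clone indicator (1 = clone, 0 = mutant) of the k-th individual.\<close>

definition birth_time :: "(nat \<Rightarrow> real) \<Rightarrow> nat \<Rightarrow> real" where
  "birth_time H k = (\<Sum>j\<in>{1..<k}. H j)"

definition yule_pop :: "(nat \<Rightarrow> real) \<Rightarrow> real \<Rightarrow> nat" where
  "yule_pop H t = card {k. 1 \<le> k \<and> birth_time H k \<le> t}"

text \<open>b_i: birth time of the first individual of type i (b_1 = 0; for i \<ge> 2 the birth
  time of the (i-1)-th mutant; infinity if there is no such mutant).\<close>
definition type_birth :: "(nat \<Rightarrow> real) \<Rightarrow> (nat \<Rightarrow> real) \<Rightarrow> nat \<Rightarrow> ereal" where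
  "type_birth H C i = (if i = 1 then 0 else
     Inf {ereal (birth_time H k) | k. 2 \<le> k \<and> C k = 0 \<and> card {j\<in>{2..k}. C j = 0} = i - 1})"

definition num_types :: "(nat \<Rightarrow> real) \<Rightarrow> (nat \<Rightarrow> real) \<Rightarrow> real \<Rightarrow> nat" where
  "num_types H C t = Max {i. 1 \<le> i \<and> type_birth H C i \<le> ereal t}"

end

theory Submission
  imports Defs
begin

text \<open>The holding time in state \<open>j\<close> is \<open>Exp(j)\<close>, so the \<open>m\<close>-th birth after the \<open>K\<close>-th happens
  at time \<open>\<Sum>K\<le>j<m. H j \<approx> ln (m / K)\<close>. The centred sums \<open>\<Sum>j\<ge>K. H j - 1/j\<close> have total
  variance at most \<open>1/(K - 1)\<close>, so by Kolmogorov's maximal inequality they stay below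
  \<open>K\<^sup>-\<^sup>1\<^sup>/\<^sup>3/4\<close> uniformly with probability tending to one; this pins \<open>Z(\<tau>\<^sub>K + t)\<close> between
  \<open>(1 \<plusminus> K\<^sup>-\<^sup>1\<^sup>/\<^sup>3) K e\<^sup>t\<close>, and the same inequality for the first \<open>K\<close> holding times gives
  \<open>\<tau>\<^sub>K \<le> (ln K)\<^sup>2\<close>. With probability at least \<open>1 - K p\<close> the first \<open>K\<close> individuals are all
  mutants, so \<open>b\<^sub>K = \<tau>\<^sub>K\<close>; and Kolmogorov's inequality on dyadic blocks shows that the number
  of clones among the first \<open>m\<close> individuals stays below \<open>K\<^sup>-\<^sup>1\<^sup>/\<^sup>3 m\<close> for all \<open>m \<ge> K\<close>.
  Since every mutant founds a new type, \<open>T\<close> lies between \<open>Z\<close> minus the clones and \<open>Z\<close>.\<close>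

section \<open>Kolmogorov's maximal inequality\<close>

context prob_space
begin

lemma indep_sets_reindex:
  assumes ind: "indep_sets F (f ` J)" and inj: "inj_on f J"
  shows "indep_sets (\<lambda>j. F (f j)) J"
  unfolding indep_sets_def
proof (intro conjI ballI allI impI)
  fix j assume "j \<in> J"
  then show "F (f j) \<subseteq> events" using ind unfolding indep_sets_def by auto
next
  fix L A assume L: "L \<subseteq> J" "L \<noteq> {}" "finite L" and A: "A \<in> Pi L (\<lambda>j. F (f j))"
  define B where "B i = A (the_inv_into L f i)" for i
  have injL: "inj_on f L" using inj L(1) by (rule inj_on_subset)
  have BA: "B (f j) = A j" if "j \<in> L" for j
    unfolding B_def using the_inv_into_f_f[OF injL that] by simp
  have "B \<in> Pi (f ` L) F" using A BA by auto
  moreover have "f ` L \<subseteq> f ` J" "f ` L \<noteq> {}" "finite (f ` L)" using L by auto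
  ultimately have "prob (\<Inter>i\<in>f ` L. B i) = (\<Prod>i\<in>f ` L. prob (B i))"
    using ind unfolding indep_sets_def by blast
  moreover have "(\<Inter>i\<in>f ` L. B i) = (\<Inter>j\<in>L. A j)" using BA by auto
  moreover have "(\<Prod>i\<in>f ` L. prob (B i)) = (\<Prod>j\<in>L. prob (A j))"
    using BA by (simp add: prod.reindex[OF injL])
  ultimately show "prob (\<Inter>j\<in>L. A j) = (\<Prod>j\<in>L. prob (A j))" by simp
qed

lemma indep_vars_reindex:
  assumes "indep_vars M' X (f ` J)" and "inj_on f J"
  shows "indep_vars (\<lambda>j. M' (f j)) (\<lambda>j. X (f j)) J"
  using assms unfolding indep_vars_def2
  by (auto intro!: indep_sets_reindex[where F="\<lambda>i. {X i -` A \<inter> space M |A. A \<in> sets (M' i)}"])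

lemma indep_vars_mult_centered:
  fixes X :: "'i \<Rightarrow> 'a \<Rightarrow> real"
  assumes ind: "indep_vars (\<lambda>_. borel) X I" and A: "A \<subseteq> I" "j \<in> I" "j \<notin> A"
    and g: "g \<in> borel_measurable (PiM A (\<lambda>_. borel))"
    and int_g: "integrable M (\<lambda>\<omega>. g (restrict (\<lambda>i. X i \<omega>) A))"
    and int_X: "integrable M (X j)" and mean: "expectation (X j) = 0"
  shows "integrable M (\<lambda>\<omega>. g (restrict (\<lambda>i. X i \<omega>) A) * X j \<omega>)"
    and "expectation (\<lambda>\<omega>. g (restrict (\<lambda>i. X i \<omega>) A) * X j \<omega>) = 0"
proof -
  have "indep_var borel (g \<circ> (\<lambda>\<omega>. restrict (\<lambda>i. X i \<omega>) A))
      borel ((\<lambda>f. f j) \<circ> (\<lambda>\<omega>. restrict (\<lambda>i. X i \<omega>) {j}))"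
    by (intro indep_var_compose[OF indep_var_restrict[OF ind]] g) (use A in auto)
  then have indep: "indep_var borel (\<lambda>\<omega>. g (restrict (\<lambda>i. X i \<omega>) A)) borel (X j)"
    by (simp add: comp_def)
  show "integrable M (\<lambda>\<omega>. g (restrict (\<lambda>i. X i \<omega>) A) * X j \<omega>)"
    using indep_var_integrable[OF indep int_g int_X] .
  show "expectation (\<lambda>\<omega>. g (restrict (\<lambda>i. X i \<omega>) A) * X j \<omega>) = 0"
    using indep_var_lebesgue_integral[OF indep int_g int_X] mean by simp
qed

lemma indep_vars_mult_centered_sum:
  fixes X :: "'i \<Rightarrow> 'a \<Rightarrow> real"
  assumes ind: "indep_vars (\<lambda>_. borel) X I" and AJ: "A \<subseteq> I" "J \<subseteq> I" "A \<inter> J = {}"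
    and g: "g \<in> borel_measurable (PiM A (\<lambda>_. borel))"
    and int_g: "integrable M (\<lambda>\<omega>. g (restrict (\<lambda>i. X i \<omega>) A))"
    and int_X: "\<And>j. j \<in> J \<Longrightarrow> integrable M (X j)" and mean: "\<And>j. j \<in> J \<Longrightarrow> expectation (X j) = 0"
  shows "integrable M (\<lambda>\<omega>. g (restrict (\<lambda>i. X i \<omega>) A) * (\<Sum>j\<in>J. X j \<omega>))"
    and "expectation (\<lambda>\<omega>. g (restrict (\<lambda>i. X i \<omega>) A) * (\<Sum>j\<in>J. X j \<omega>)) = 0"
proof -
  have eq: "(\<lambda>\<omega>. g (restrict (\<lambda>i. X i \<omega>) A) * (\<Sum>j\<in>J. X j \<omega>))
      = (\<lambda>\<omega>. \<Sum>j\<in>J. g (restrict (\<lambda>i. X i \<omega>) A) * X j \<omega>)"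
    by (simp add: sum_distrib_left)
  have "integrable M (\<lambda>\<omega>. g (restrict (\<lambda>i. X i \<omega>) A) * X j \<omega>)"
    "expectation (\<lambda>\<omega>. g (restrict (\<lambda>i. X i \<omega>) A) * X j \<omega>) = 0" if "j \<in> J" for j
  proof -
    have "j \<in> I" "j \<notin> A" using AJ that by auto
    from indep_vars_mult_centered[OF ind AJ(1) this g int_g int_X[OF that] mean[OF that]]
    show "integrable M (\<lambda>\<omega>. g (restrict (\<lambda>i. X i \<omega>) A) * X j \<omega>)"
      "expectation (\<lambda>\<omega>. g (restrict (\<lambda>i. X i \<omega>) A) * X j \<omega>) = 0" by blast+
  qed
  then show "integrable M (\<lambda>\<omega>. g (restrict (\<lambda>i. X i \<omega>) A) * (\<Sum>j\<in>J. X j \<omega>))"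
    and "expectation (\<lambda>\<omega>. g (restrict (\<lambda>i. X i \<omega>) A) * (\<Sum>j\<in>J. X j \<omega>)) = 0"
    unfolding eq by auto
qed

lemma expectation_square_sum_indep:
  fixes X :: "nat \<Rightarrow> 'a \<Rightarrow> real"
  assumes ind: "indep_vars (\<lambda>_. borel) X I" and sub: "{a..<b} \<subseteq> I"
    and sq: "\<And>j. j \<in> {a..<b} \<Longrightarrow> integrable M (\<lambda>\<omega>. X j \<omega> ^ 2)"
    and mean: "\<And>j. j \<in> {a..<b} \<Longrightarrow> expectation (X j) = 0"
  shows "integrable M (\<lambda>\<omega>. (\<Sum>j\<in>{a..<b}. X j \<omega>) ^ 2) \<and>
    expectation (\<lambda>\<omega>. (\<Sum>j\<in>{a..<b}. X j \<omega>) ^ 2) = (\<Sum>j\<in>{a..<b}. expectation (\<lambda>\<omega>. X j \<omega> ^ 2))"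
  using sub sq mean
proof (induction b)
  case 0
  then show ?case by simp
next
  case (Suc b)
  show ?case
  proof (cases "b < a")
    case True
    then show ?thesis by simp
  next
    case False
    then have ins: "{a..<Suc b} = insert b {a..<b}" by auto
    have b: "b \<in> I" "integrable M (\<lambda>\<omega>. X b \<omega> ^ 2)" "expectation (X b) = 0"
      using Suc.prems False by auto
    have "integrable M (\<lambda>\<omega>. (\<Sum>j\<in>{a..<b}. X j \<omega>) ^ 2) \<and>
      expectation (\<lambda>\<omega>. (\<Sum>j\<in>{a..<b}. X j \<omega>) ^ 2) = (\<Sum>j\<in>{a..<b}. expectation (\<lambda>\<omega>. X j \<omega> ^ 2))"
      by (rule Suc.IH) (use Suc.prems in auto)
    then have IH: "integrable M (\<lambda>\<omega>. (\<Sum>j\<in>{a..<b}. X j \<omega>) ^ 2)"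
      "expectation (\<lambda>\<omega>. (\<Sum>j\<in>{a..<b}. X j \<omega>) ^ 2) = (\<Sum>j\<in>{a..<b}. expectation (\<lambda>\<omega>. X j \<omega> ^ 2))"
      by auto
    have int_X: "integrable M (X j)" if "j \<in> {a..<Suc b}" for j
    proof (rule square_integrable_imp_integrable)
      show "X j \<in> borel_measurable M"
        using ind Suc.prems(1) that unfolding indep_vars_def by auto
    qed (use Suc.prems(2) that in auto)
    have sum_meas: "(\<lambda>x::nat \<Rightarrow> real. \<Sum>j\<in>{a..<b}. x j) \<in> borel_measurable (PiM {a..<b} (\<lambda>_. borel))"
      by measurable
    have "integrable M (\<lambda>\<omega>. \<Sum>j\<in>{a..<b}. X j \<omega>)"
      using int_X by (intro Bochner_Integration.integrable_sum) auto
    then have "integrable M (\<lambda>\<omega>. (\<lambda>x. \<Sum>j\<in>{a..<b}. x j) (restrict (\<lambda>i. X i \<omega>) {a..<b}))"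
      by simp
    note indep_vars_mult_centered[OF ind _ _ _ sum_meas this int_X[of b] b(3)]
    then have cross: "integrable M (\<lambda>\<omega>. (\<Sum>j\<in>{a..<b}. X j \<omega>) * X b \<omega>)"
      "expectation (\<lambda>\<omega>. (\<Sum>j\<in>{a..<b}. X j \<omega>) * X b \<omega>) = 0"
      using Suc.prems(1) False by (auto simp: subset_eq)
    have "(\<lambda>\<omega>. (\<Sum>j\<in>{a..<Suc b}. X j \<omega>) ^ 2) =
        (\<lambda>\<omega>. (\<Sum>j\<in>{a..<b}. X j \<omega>) ^ 2 + 2 * ((\<Sum>j\<in>{a..<b}. X j \<omega>) * X b \<omega>) + X b \<omega> ^ 2)"
      unfolding ins by (auto simp: power2_eq_square algebra_simps)
    then show ?thesis
      using IH cross b ins by (simp add: add.commute)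
  qed
qed

lemma second_moment_on_event_ge:
  fixes Z R :: "'a \<Rightarrow> real"
  assumes A: "A \<in> events" and Z: "\<And>\<omega>. \<omega> \<in> A \<Longrightarrow> \<epsilon>\<^sup>2 \<le> (Z \<omega>)\<^sup>2"
    and int_sq: "integrable M (\<lambda>\<omega>. (Z \<omega> + R \<omega>)\<^sup>2)"
    and int_ZR: "integrable M (\<lambda>\<omega>. Z \<omega> * indicator A \<omega> * R \<omega>)"
    and orth: "expectation (\<lambda>\<omega>. Z \<omega> * indicator A \<omega> * R \<omega>) = 0"
  shows "\<epsilon>\<^sup>2 * prob A \<le> expectation (\<lambda>\<omega>. (Z \<omega> + R \<omega>)\<^sup>2 * indicator A \<omega>)"
proof -
  have int_A: "integrable M (indicator A :: 'a \<Rightarrow> real)"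
    by (rule integrable_real_indicator[OF A]) (simp add: less_top[symmetric])
  have pointwise: "\<epsilon>\<^sup>2 * indicator A \<omega> + 2 * (Z \<omega> * indicator A \<omega> * R \<omega>) \<le> (Z \<omega> + R \<omega>)\<^sup>2 * indicator A \<omega>"
    for \<omega>
  proof (cases "\<omega> \<in> A")
    case True
    moreover have "(Z \<omega>)\<^sup>2 + 2 * (Z \<omega> * R \<omega>) \<le> (Z \<omega> + R \<omega>)\<^sup>2"
      by (simp add: power2_eq_square algebra_simps)
    ultimately show ?thesis using Z[of \<omega>] by simp
  qed simp
  have "\<epsilon>\<^sup>2 * prob A = expectation (\<lambda>\<omega>. \<epsilon>\<^sup>2 * indicator A \<omega> + 2 * (Z \<omega> * indicator A \<omega> * R \<omega>))"
    using int_ZR orth int_A A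
    by (subst Bochner_Integration.integral_add) (auto simp: integral_indicator Int_absorb2 sets.sets_into_space)
  also have "\<dots> \<le> expectation (\<lambda>\<omega>. (Z \<omega> + R \<omega>)\<^sup>2 * indicator A \<omega>)"
    using pointwise int_ZR int_A integrable_real_mult_indicator[OF A int_sq]
    by (intro integral_mono Bochner_Integration.integrable_add integrable_mult_right) auto
  finally show ?thesis .
qed

lemma first_passage_second_moment:
  fixes X :: "nat \<Rightarrow> 'a \<Rightarrow> real"
  assumes ind: "indep_vars (\<lambda>_. borel) X I" and sub: "{a..<b} \<subseteq> I"
    and meas: "\<And>j. X j \<in> borel_measurable M"
    and sq: "\<And>j. j \<in> {a..<b} \<Longrightarrow> integrable M (\<lambda>\<omega>. X j \<omega> ^ 2)"
    and mean: "\<And>j. j \<in> {a..<b} \<Longrightarrow> expectation (X j) = 0"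
    and eps: "0 \<le> \<epsilon>" and m: "m \<in> {a..b}"
  defines "S \<equiv> \<lambda>n \<omega>. \<Sum>j\<in>{a..<n}. X j \<omega>"
  defines "A \<equiv> {\<omega>\<in>space M. \<epsilon> \<le> \<bar>S m \<omega>\<bar> \<and> (\<forall>i\<in>{a..<m}. \<bar>S i \<omega>\<bar> < \<epsilon>)}"
  shows "\<epsilon>\<^sup>2 * prob A \<le> expectation (\<lambda>\<omega>. S b \<omega> ^ 2 * indicator A \<omega>)"
proof -
  have [measurable]: "S n \<in> borel_measurable M" for n unfolding S_def using meas by measurable
  have A_sets[measurable]: "A \<in> events" unfolding A_def by measurable
  have int_X: "integrable M (X j)" if "j \<in> {a..<b}" for j
    using square_integrable_imp_integrable[OF meas sq[OF that]] .
  define R where "R \<omega> = (\<Sum>j\<in>{m..<b}. X j \<omega>)" for \<omega>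
  have Sb_eq: "S b \<omega> = S m \<omega> + R \<omega>" for \<omega>
    unfolding S_def R_def using m by (simp add: sum.atLeastLessThan_concat)
  \<comment> \<open>\<open>S m \<omega> * indicator A \<omega>\<close> depends on \<open>X a, \<dots>, X (m - 1)\<close> only, hence is
    orthogonal to the remaining increments \<open>R\<close>.\<close>
  define g where "g x = (\<Sum>j\<in>{a..<m}. x j) *
     of_bool (\<epsilon> \<le> \<bar>\<Sum>j\<in>{a..<m}. x j\<bar> \<and> (\<forall>i\<in>{a..<m}. \<bar>\<Sum>j\<in>{a..<i}. x j\<bar> < \<epsilon>))"
    for x :: "nat \<Rightarrow> real"
  have g_meas: "g \<in> borel_measurable (PiM {a..<m} (\<lambda>_. borel))"
    unfolding g_def by measurable
  have g_eq: "g (restrict (\<lambda>i. X i \<omega>) {a..<m}) = S m \<omega> * indicator A \<omega>" if "\<omega> \<in> space M" for \<omega>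
  proof -
    have "(\<Sum>j\<in>{a..<i}. restrict (\<lambda>i. X i \<omega>) {a..<m} j) = S i \<omega>" if "i \<le> m" for i
      unfolding S_def using that by (intro sum.cong) auto
    then show ?thesis using \<open>\<omega> \<in> space M\<close> unfolding g_def A_def by (auto simp: indicator_def)
  qed
  have int_g: "integrable M (\<lambda>\<omega>. g (restrict (\<lambda>i. X i \<omega>) {a..<m}))"
  proof (subst Bochner_Integration.integrable_cong[OF refl g_eq])
    show "integrable M (\<lambda>\<omega>. S m \<omega> * indicator A \<omega>)"
      using int_X m unfolding S_def
      by (intro integrable_real_mult_indicator Bochner_Integration.integrable_sum) auto
  qed
  have subsets: "{a..<m} \<subseteq> I" "{m..<b} \<subseteq> I" "{a..<m} \<inter> {m..<b} = {}" using sub m by auto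
  have tail: "integrable M (X j)" "expectation (X j) = 0" if "j \<in> {m..<b}" for j
    using int_X mean m that by auto
  note orthogonal = indep_vars_mult_centered_sum[OF ind subsets g_meas int_g tail, folded R_def]
  have g_R_eq: "g (restrict (\<lambda>i. X i \<omega>) {a..<m}) * R \<omega> = S m \<omega> * indicator A \<omega> * R \<omega>"
    if "\<omega> \<in> space M" for \<omega>
    using g_eq[OF that] by simp
  have "\<epsilon>\<^sup>2 * prob A \<le> expectation (\<lambda>\<omega>. (S m \<omega> + R \<omega>)\<^sup>2 * indicator A \<omega>)"
  proof (rule second_moment_on_event_ge[OF A_sets])
    show "\<epsilon>\<^sup>2 \<le> (S m \<omega>)\<^sup>2" if "\<omega> \<in> A" for \<omega>
      using that eps unfolding A_def by (metis (mono_tags, lifting) abs_le_square_iff abs_of_nonneg mem_Collect_eq)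
    show "integrable M (\<lambda>\<omega>. (S m \<omega> + R \<omega>)\<^sup>2)"
      using expectation_square_sum_indep[OF ind sub sq mean] Sb_eq unfolding S_def by simp
    show "integrable M (\<lambda>\<omega>. S m \<omega> * indicator A \<omega> * R \<omega>)"
      using orthogonal(1) by (subst Bochner_Integration.integrable_cong[OF refl g_R_eq[symmetric]])
    show "expectation (\<lambda>\<omega>. S m \<omega> * indicator A \<omega> * R \<omega>) = 0"
      using orthogonal(2) by (subst Bochner_Integration.integral_cong[OF refl g_R_eq[symmetric]])
  qed
  then show ?thesis using Sb_eq by simp
qed

lemma kolmogorov_maximal_inequality:
  fixes X :: "nat \<Rightarrow> 'a \<Rightarrow> real"
  assumes ind: "indep_vars (\<lambda>_. borel) X I" and sub: "{a..<b} \<subseteq> I"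
    and meas: "\<And>j. X j \<in> borel_measurable M"
    and sq: "\<And>j. j \<in> {a..<b} \<Longrightarrow> integrable M (\<lambda>\<omega>. X j \<omega> ^ 2)"
    and mean: "\<And>j. j \<in> {a..<b} \<Longrightarrow> expectation (X j) = 0"
    and eps: "0 < \<epsilon>"
  shows "prob {\<omega>\<in>space M. \<exists>m\<in>{a..b}. \<epsilon> \<le> \<bar>\<Sum>j\<in>{a..<m}. X j \<omega>\<bar>}
     \<le> (\<Sum>j\<in>{a..<b}. expectation (\<lambda>\<omega>. X j \<omega> ^ 2)) / \<epsilon>\<^sup>2"
proof -
  define S where "S n \<omega> = (\<Sum>j\<in>{a..<n}. X j \<omega>)" for n \<omega>
  define A where "A n = {\<omega>\<in>space M. \<epsilon> \<le> \<bar>S n \<omega>\<bar> \<and> (\<forall>i\<in>{a..<n}. \<bar>S i \<omega>\<bar> < \<epsilon>)}" for n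
  define E where "E = {\<omega>\<in>space M. \<exists>m\<in>{a..b}. \<epsilon> \<le> \<bar>S m \<omega>\<bar>}"
  have [measurable]: "S n \<in> borel_measurable M" for n unfolding S_def using meas by measurable
  have A_sets[measurable]: "A n \<in> events" for n unfolding A_def by measurable
  have disj: "disjoint_family_on A {a..b}"
    unfolding disjoint_family_on_def
  proof (intro ballI impI)
    fix m n assume "m \<in> {a..b}" "n \<in> {a..b}" "m \<noteq> n"
    then have "m \<in> {a..<n} \<or> n \<in> {a..<m}" by auto
    then show "A m \<inter> A n = {}" unfolding A_def by fastforce
  qed
  have E_eq: "E = (\<Union>n\<in>{a..b}. A n)"
  proof (intro equalityI subsetI)
    fix \<omega> assume "\<omega> \<in> E"
    then have ex: "\<exists>m. m \<in> {a..b} \<and> \<epsilon> \<le> \<bar>S m \<omega>\<bar>" and \<omega>: "\<omega> \<in> space M"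
      unfolding E_def by auto
    define n where "n = (LEAST m. m \<in> {a..b} \<and> \<epsilon> \<le> \<bar>S m \<omega>\<bar>)"
    have n: "n \<in> {a..b}" "\<epsilon> \<le> \<bar>S n \<omega>\<bar>"
      using LeastI_ex[OF ex] unfolding n_def by auto
    have "\<bar>S i \<omega>\<bar> < \<epsilon>" if "i \<in> {a..<n}" for i
      using not_less_Least[of i] that n unfolding n_def by force
    then show "\<omega> \<in> (\<Union>n\<in>{a..b}. A n)" using n \<omega> unfolding A_def by auto
  qed (auto simp: A_def E_def)
  have Sb: "integrable M (\<lambda>\<omega>. S b \<omega> ^ 2)"
     "expectation (\<lambda>\<omega>. S b \<omega> ^ 2) = (\<Sum>j\<in>{a..<b}. expectation (\<lambda>\<omega>. X j \<omega> ^ 2))"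
    using expectation_square_sum_indep[OF ind sub sq mean] unfolding S_def by blast+
  have "\<epsilon>\<^sup>2 * prob E = (\<Sum>n\<in>{a..b}. \<epsilon>\<^sup>2 * prob (A n))"
    unfolding E_eq using disj by (simp add: measure_finite_Union sum_distrib_left image_subset_iff)
  also have "\<dots> \<le> (\<Sum>n\<in>{a..b}. expectation (\<lambda>\<omega>. S b \<omega> ^ 2 * indicator (A n) \<omega>))"
    using first_passage_second_moment[OF ind sub meas sq mean] eps
    unfolding A_def S_def by (intro sum_mono) auto
  also have "\<dots> = expectation (\<lambda>\<omega>. S b \<omega> ^ 2 * indicator E \<omega>)"
    using Sb(1) disj unfolding E_eq
    by (subst Bochner_Integration.integral_sum[symmetric])
      (auto intro: integrable_real_mult_indicator simp: indicator_UN_disjoint sum_distrib_left)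
  also have "\<dots> \<le> expectation (\<lambda>\<omega>. S b \<omega> ^ 2)"
    using Sb E_eq integrable_real_mult_indicator[OF _ Sb(1), of E]
    by (intro integral_mono) (auto simp: indicator_def)
  finally show ?thesis
    using Sb eps unfolding E_def S_def by (simp add: field_simps)
qed

lemma kolmogorov_maximal_inequality_infinite:
  fixes X :: "nat \<Rightarrow> 'a \<Rightarrow> real"
  assumes ind: "indep_vars (\<lambda>_. borel) X I" and sub: "{a..} \<subseteq> I"
    and meas: "\<And>j. X j \<in> borel_measurable M"
    and sq: "\<And>j. a \<le> j \<Longrightarrow> integrable M (\<lambda>\<omega>. X j \<omega> ^ 2)"
    and mean: "\<And>j. a \<le> j \<Longrightarrow> expectation (X j) = 0"
    and eps: "0 < \<epsilon>"
    and bound: "\<And>b. a \<le> b \<Longrightarrow> (\<Sum>j\<in>{a..<b}. expectation (\<lambda>\<omega>. X j \<omega> ^ 2)) \<le> B"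
  shows "prob {\<omega>\<in>space M. \<exists>m\<ge>a. \<epsilon> \<le> \<bar>\<Sum>j\<in>{a..<m}. X j \<omega>\<bar>} \<le> B / \<epsilon>\<^sup>2"
proof -
  define F where "F b = {\<omega>\<in>space M. \<exists>m\<in>{a..b}. \<epsilon> \<le> \<bar>\<Sum>j\<in>{a..<m}. X j \<omega>\<bar>}" for b
  have "F b \<in> events" for b unfolding F_def using meas by measurable
  moreover have "incseq F" unfolding incseq_def F_def by force
  ultimately have "(\<lambda>b. prob (F b)) \<longlonglongrightarrow> prob (\<Union>b. F b)"
    by (intro finite_Lim_measure_incseq) auto
  moreover have "prob (F b) \<le> B / \<epsilon>\<^sup>2" for b
  proof (cases "a \<le> b")
    case True
    have "prob (F b) \<le> (\<Sum>j\<in>{a..<b}. expectation (\<lambda>\<omega>. X j \<omega> ^ 2)) / \<epsilon>\<^sup>2"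
      unfolding F_def using sub by (intro kolmogorov_maximal_inequality[OF ind _ meas sq mean eps]) auto
    also have "\<dots> \<le> B / \<epsilon>\<^sup>2" using bound[OF True] by (simp add: divide_right_mono)
    finally show ?thesis .
  next
    case False
    then show ?thesis using bound[of a] unfolding F_def by auto
  qed
  ultimately have "prob (\<Union>b. F b) \<le> B / \<epsilon>\<^sup>2"
    by (intro LIMSEQ_le_const2) auto
  moreover have "(\<Union>b. F b) = {\<omega>\<in>space M. \<exists>m\<ge>a. \<epsilon> \<le> \<bar>\<Sum>j\<in>{a..<m}. X j \<omega>\<bar>}"
    unfolding F_def by force
  ultimately show ?thesis by simp
qed

end

lemma ln_diff_le_harmonic_sum:
  assumes "1 \<le> K" "K \<le> m"
  shows "ln (real m) - ln (real K) \<le> (\<Sum>j\<in>{K..<m}. 1 / real j)"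
  using assms(2)
proof (induction m rule: dec_induct)
  case (step m)
  have m: "1 \<le> real m" using assms step by simp
  have "1 + 1 / real m = real (Suc m) / real m" using m by (simp add: field_simps)
  then have "ln (real (Suc m)) - ln (real m) = ln (1 + 1 / real m)"
    using m by (simp add: ln_div)
  also have "\<dots> \<le> 1 / real m" by (rule ln_add_one_self_le_self) simp
  finally show ?case using step by simp
qed simp

lemma harmonic_sum_le_ln_diff:
  assumes "2 \<le> K" "K \<le> m"
  shows "(\<Sum>j\<in>{K..<m}. 1 / real j) \<le> ln (real m - 1) - ln (real K - 1)"
  using assms(2)
proof (induction m rule: dec_induct)
  case (step m)
  have m: "2 \<le> real m" using assms step by simp
  have "ln ((real m - 1) / real m) \<le> (real m - 1) / real m - 1"
    using m by (intro ln_le_minus_one) auto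
  also have "\<dots> = - (1 / real m)" using m by (simp add: field_simps)
  finally have "1 / real m \<le> ln (real m) - ln (real m - 1)" using m by (simp add: ln_div)
  then show ?case using step by simp
qed simp

lemma harmonic_sum_le_ln_diff':
  assumes "2 \<le> K" "K \<le> m"
  shows "(\<Sum>j\<in>{K..<m}. 1 / real j) \<le> ln (real m) - ln (real K) + 1 / (real K - 1)"
proof -
  have K: "2 \<le> real K" using assms by simp
  have "ln (real K / (real K - 1)) \<le> real K / (real K - 1) - 1"
    using K by (intro ln_le_minus_one) auto
  then have "ln (real K) - ln (real K - 1) \<le> 1 / (real K - 1)"
    using K by (simp add: ln_div field_simps)
  moreover have "ln (real m - 1) \<le> ln (real m)" using K assms by simp
  ultimately show ?thesis using harmonic_sum_le_ln_diff[OF assms] by linarith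
qed

lemma inverse_square_sum_le:
  assumes "2 \<le> a"
  shows "(\<Sum>j\<in>{a..<b}. 1 / (real j)\<^sup>2) \<le> 1 / (real a - 1)"
proof (cases "a \<le> b")
  case True
  have "(\<Sum>j\<in>{a..<b}. 1 / (real j)\<^sup>2) \<le> (\<Sum>j\<in>{a..<b}. 1 / (real j - 1) - 1 / real j)"
  proof (intro sum_mono)
    fix j assume "j \<in> {a..<b}"
    then have "2 \<le> real j" using assms by auto
    then show "1 / (real j)\<^sup>2 \<le> 1 / (real j - 1) - 1 / real j"
      by (simp add: field_simps power2_eq_square)
  qed
  also have "\<dots> = 1 / (real a - 1) - 1 / (real b - 1)"
    using True by (induction b rule: dec_induct) simp_all
  also have "\<dots> \<le> 1 / (real a - 1)" using True assms by simp
  finally show ?thesis .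
qed simp

lemma inverse_cube_root_cube:
  fixes x :: real
  assumes "0 < x"
  shows "(x powr (-1/3)) ^ 3 = 1 / x"
proof -
  have "(x powr (-1/3)) ^ 3 = x powr (-1/3 * 3)"
    using assms by (simp add: powr_realpow[symmetric] powr_powr)
  also have "\<dots> = 1 / x" using assms by (simp add: powr_minus_divide)
  finally show ?thesis .
qed

lemma inverse_cube_root_bounds:
  assumes "8 \<le> K"
  shows "0 < real K powr (-1/3)" "real K powr (-1/3) \<le> 1/2" "4 \<le> real K * real K powr (-1/3)"
proof -
  define u where "u = real K powr (-1/3)"
  have cube: "u ^ 3 = 1 / real K" unfolding u_def using assms by (intro inverse_cube_root_cube) simp
  show u_pos: "0 < real K powr (-1/3)" using assms by simp
  have "8 * u ^ 3 \<le> real K * u ^ 3" using assms u_pos unfolding u_def by (intro mult_right_mono) auto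
  moreover have "real K * u ^ 3 = 1" using cube assms by (simp add: field_simps)
  ultimately have "u ^ 3 \<le> (1/2) ^ 3" by (simp add: power_divide)
  then show "real K powr (-1/3) \<le> 1/2"
    using power_mono_iff[of u "1/2" 3] u_pos unfolding u_def by simp
  have "(real K * u) ^ 3 = real K ^ 2"
    using cube assms by (simp add: power_mult_distrib power3_eq_cube power2_eq_square field_simps)
  also have "(4::real) ^ 3 \<le> real K ^ 2"
    using power_mono[of 8 "real K" 2] assms by simp
  finally show "4 \<le> real K * real K powr (-1/3)"
    using power_mono_iff[of 4 "real K * u" 3] u_pos unfolding u_def by simp
qed

lemma inverse_cube_root_tail_bounds:
  assumes K: "8 \<le> K"
  defines "u \<equiv> real K powr (-1/3)"
  shows "1 / real K \<le> u" and "1 / ((real K - 1) * (u / 4)\<^sup>2) \<le> 32 * u"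
    and "u\<^sup>2 * real K = 1 / u"
proof -
  have u: "0 < u" "u \<le> 1/2" using inverse_cube_root_bounds[OF K] unfolding u_def by auto
  have cube: "u ^ 3 * real K = 1" unfolding u_def using K inverse_cube_root_cube[of "real K"] by simp
  have "u ^ 3 \<le> u" using u power_le_one[of u 2] mult_left_le[of "u\<^sup>2" u]
    by (simp add: power3_eq_cube power2_eq_square mult.assoc)
  then have "u ^ 3 * real K \<le> u * real K" by (intro mult_right_mono) auto
  then have "1 \<le> u * real K" using cube by (simp add: mult.commute)
  then show "1 / real K \<le> u" using K by (simp add: field_simps)
  show sq: "u\<^sup>2 * real K = 1 / u" using cube u by (simp add: field_simps power3_eq_cube power2_eq_square)
  have "2 * u ^ 3 \<le> real K * u ^ 3" using K u by (intro mult_right_mono) auto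
  then have "u ^ 3 \<le> 1/2" using cube by (simp add: mult.commute)
  then have "1 / (2 * u) \<le> u\<^sup>2 * (real K - 1)"
    using sq u by (simp add: field_simps power3_eq_cube power2_eq_square)
  then have "1 / (u\<^sup>2 * (real K - 1)) \<le> 1 / (1 / (2 * u))"
    using u K by (intro divide_left_mono mult_pos_pos) auto
  then have "1 / (u\<^sup>2 * (real K - 1)) \<le> 2 * u" by simp
  then show "1 / ((real K - 1) * (u / 4)\<^sup>2) \<le> 32 * u"
    by (simp add: power2_eq_square field_simps)
qed

lemma ln_square_bound:
  fixes l :: real
  assumes "3 \<le> l"
  shows "1 + l < l\<^sup>2" and "2 / (l\<^sup>2 - 1 - l)\<^sup>2 \<le> 2 / l\<^sup>2"
proof -
  have "3 * l \<le> l * l" using assms by (intro mult_right_mono) auto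
  then have l: "l \<le> l\<^sup>2 - 1 - l" unfolding power2_eq_square using assms by linarith
  then show "1 + l < l\<^sup>2" using assms by linarith
  have "l\<^sup>2 \<le> (l\<^sup>2 - 1 - l)\<^sup>2" using l assms by (intro power_mono) auto
  moreover have "0 < l\<^sup>2 - 1 - l" using l assms by linarith
  ultimately show "2 / (l\<^sup>2 - 1 - l)\<^sup>2 \<le> 2 / l\<^sup>2" using assms by (intro divide_left_mono mult_pos_pos) auto
qed

lemma exp_quarter_le:
  fixes u :: real
  assumes "0 \<le> u" "u \<le> 1/2"
  shows "exp (u / 4) \<le> 1 + u"
proof -
  have "exp (u / 4) \<le> 1 + u / 4 + (u / 4)\<^sup>2" using assms by (intro exp_bound) auto
  also have "\<dots> \<le> 1 + u"
    using mult_left_le[of u u] assms by (simp add: power2_eq_square field_simps)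
  finally show ?thesis .
qed

lemma exists_dyadic_block:
  fixes K m :: nat
  assumes "1 \<le> K" "K \<le> m"
  shows "\<exists>i. K * 2 ^ i \<le> m \<and> m < K * 2 ^ (i + 1)"
proof -
  have ex: "\<exists>i. m < K * 2 ^ (i + 1)"
  proof
    have "m < 2 ^ m" by (rule less_exp)
    also have "\<dots> \<le> K * 2 ^ (m + 1)" using assms by simp
    finally show "m < K * 2 ^ (m + 1)" .
  qed
  define i where "i = (LEAST i. m < K * 2 ^ (i + 1))"
  have "m < K * 2 ^ (i + 1)" unfolding i_def by (rule LeastI_ex[OF ex])
  moreover have "K * 2 ^ i \<le> m"
  proof (cases i)
    case (Suc i')
    have "\<not> m < K * 2 ^ (i' + 1)"
      using not_less_Least[of i' "\<lambda>i. m < K * 2 ^ (i + 1)"] Suc unfolding i_def by simp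
    then show ?thesis using Suc by simp
  qed (use assms in simp)
  ultimately show ?thesis by blast
qed

lemma dyadic_block_excess:
  fixes c :: "nat \<Rightarrow> real"
  assumes c0: "\<And>j. 2 \<le> j \<Longrightarrow> 0 \<le> c j" and p: "0 \<le> p" "4 * p \<le> u"
    and K: "1 \<le> K" "K \<le> m" and big: "u * real m < (\<Sum>j\<in>{2..m}. c j)"
  shows "\<exists>i. u * real K * 2 ^ i / 2 \<le> \<bar>\<Sum>j\<in>{2..K * 2 ^ (i + 1)}. c j - p\<bar>"
proof -
  obtain i where i: "K * 2 ^ i \<le> m" "m < K * 2 ^ (i + 1)"
    using exists_dyadic_block[OF K] by blast
  define N where "N = K * 2 ^ (i + 1)"
  define A where "A = real K * 2 ^ i"
  have "(\<Sum>j\<in>{2..m}. c j) \<le> (\<Sum>j\<in>{2..N}. c j)"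
    using i c0 unfolding N_def by (intro sum_mono2) auto
  moreover have "(\<Sum>j\<in>{2..N}. c j - p) = (\<Sum>j\<in>{2..N}. c j) - real (N - 1) * p"
    by (simp add: sum_subtractf)
  moreover have "real (N - 1) * p \<le> real N * p" using p by (intro mult_right_mono) auto
  moreover have "real N * p = A * (2 * p)" unfolding N_def A_def by simp
  moreover have "A * (2 * p) \<le> A * (u / 2)" using p unfolding A_def by (intro mult_left_mono) auto
  moreover have "A \<le> real m"
    using i(1) unfolding A_def by (metis of_nat_le_iff of_nat_mult of_nat_numeral of_nat_power)
  then have "u * A \<le> u * real m" using p by (intro mult_left_mono) auto
  moreover have "A * (u / 2) = u * A / 2" by simp
  ultimately have "u * A / 2 \<le> (\<Sum>j\<in>{2..N}. c j - p)" using big by linarith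
  then show ?thesis unfolding N_def A_def by (intro exI[of _ i]) (simp add: mult.assoc)
qed

section \<open>Birth times\<close>

lemma birth_time_mono:
  assumes "\<And>j. 1 \<le> j \<Longrightarrow> 0 \<le> h j" and "i \<le> k"
  shows "birth_time h i \<le> birth_time h k"
  unfolding birth_time_def using assms by (intro sum_mono2) auto

lemma birth_time_split:
  assumes "1 \<le> K" "K \<le> m"
  shows "birth_time h m = birth_time h K + (\<Sum>j\<in>{K..<m}. h j)"
  unfolding birth_time_def using assms by (simp add: sum.atLeastLessThan_concat)

definition born_by :: "(nat \<Rightarrow> real) \<Rightarrow> real \<Rightarrow> nat set" where
  "born_by h s = {k. 1 \<le> k \<and> birth_time h k \<le> s}"

lemma yule_pop_eq_card: "yule_pop h s = card (born_by h s)"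
  unfolding yule_pop_def born_by_def ..

lemma one_mem_born_by: "0 \<le> s \<Longrightarrow> 1 \<in> born_by h s"
  by (simp add: born_by_def birth_time_def)

lemma atLeastAtMost_subset_born_by:
  assumes "\<And>j. 1 \<le> j \<Longrightarrow> 0 \<le> h j" and "k \<in> born_by h s"
  shows "{1..k} \<subseteq> born_by h s"
proof
  fix i assume "i \<in> {1..k}"
  then have "birth_time h i \<le> birth_time h k" using birth_time_mono[OF assms(1)] by simp
  then show "i \<in> born_by h s" using assms(2) \<open>i \<in> {1..k}\<close> unfolding born_by_def by simp
qed

lemma le_card_born_by:
  assumes "\<And>j. 1 \<le> j \<Longrightarrow> 0 \<le> h j" and "finite (born_by h s)" and "k \<in> born_by h s"
  shows "k \<le> card (born_by h s)"
  using card_mono[OF assms(2) atLeastAtMost_subset_born_by[OF assms(1,3)]] by simp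

text \<open>If the holding times after the \<open>K\<close>-th birth deviate from their means \<open>1/j\<close> by less than
  \<open>\<delta>\<close> in total, the \<open>m\<close>-th birth happens at time \<open>ln (m / K)\<close> up to an error of order
  \<open>\<delta> + 1/K\<close>.\<close>

lemma born_by_subset:
  assumes K: "1 \<le> K" and dev: "\<And>m. K \<le> m \<Longrightarrow> - \<delta> < (\<Sum>j\<in>{K..<m}. h j - 1 / real j)"
    and t: "0 \<le> t" "0 \<le> \<delta>"
  shows "born_by h (birth_time h K + t) \<subseteq> {1..nat \<lfloor>real K * exp (t + \<delta>)\<rfloor>}"
proof
  fix m assume m: "m \<in> born_by h (birth_time h K + t)"
  have "real m \<le> real K * exp (t + \<delta>)"
  proof (cases "m \<le> K")
    case True
    have "1 \<le> exp (t + \<delta>)" using t by simp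
    then have "real K \<le> real K * exp (t + \<delta>)" by (simp add: mult_le_cancel_left1)
    then show ?thesis using True by linarith
  next
    case False
    then have Km: "K \<le> m" by simp
    have "(\<Sum>j\<in>{K..<m}. h j) \<le> t"
      using m birth_time_split[OF K Km, of h] by (simp add: born_by_def)
    moreover have "(\<Sum>j\<in>{K..<m}. h j) = (\<Sum>j\<in>{K..<m}. 1 / real j) + (\<Sum>j\<in>{K..<m}. h j - 1 / real j)"
      by (simp add: sum_subtractf)
    ultimately have "ln (real m) < ln (real K) + (t + \<delta>)"
      using ln_diff_le_harmonic_sum[OF K Km] dev[OF Km] by linarith
    then have "exp (ln (real m)) < exp (ln (real K) + (t + \<delta>))" by simp
    then show ?thesis using Km K by (simp add: exp_add)
  qed
  then show "m \<in> {1..nat \<lfloor>real K * exp (t + \<delta>)\<rfloor>}"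
    using m by (simp add: born_by_def le_nat_floor)
qed

lemma finite_born_by:
  assumes "1 \<le> K" "\<And>m. K \<le> m \<Longrightarrow> - \<delta> < (\<Sum>j\<in>{K..<m}. h j - 1 / real j)" "0 \<le> t" "0 \<le> \<delta>"
  shows "finite (born_by h (birth_time h K + t))"
  using finite_subset[OF born_by_subset[OF assms]] by simp

lemma yule_pop_le_exp:
  assumes "1 \<le> K" "\<And>m. K \<le> m \<Longrightarrow> - \<delta> < (\<Sum>j\<in>{K..<m}. h j - 1 / real j)" "0 \<le> t" "0 \<le> \<delta>"
  shows "real (yule_pop h (birth_time h K + t)) \<le> real K * exp (t + \<delta>)"
proof -
  have "yule_pop h (birth_time h K + t) \<le> nat \<lfloor>real K * exp (t + \<delta>)\<rfloor>"
    using card_mono[OF _ born_by_subset[OF assms]] by (simp add: yule_pop_eq_card)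
  moreover have "real (nat \<lfloor>real K * exp (t + \<delta>)\<rfloor>) \<le> real K * exp (t + \<delta>)"
    by (rule of_nat_floor) simp
  ultimately show ?thesis by (meson of_nat_le_iff order_trans)
qed

lemma exists_born_by_ge_exp:
  assumes K: "2 \<le> K" and dev: "\<And>m. K \<le> m \<Longrightarrow> (\<Sum>j\<in>{K..<m}. h j - 1 / real j) < \<delta>"
    and t: "0 \<le> t"
  shows "\<exists>m\<ge>K. m \<in> born_by h (birth_time h K + t) \<and>
    real K * exp (t - \<delta> - 1 / (real K - 1)) - 1 \<le> real m"
proof -
  define r where "r = real K * exp (t - \<delta> - 1 / (real K - 1))"
  define m where "m = max K (nat \<lfloor>r\<rfloor>)"
  have "K \<le> m" "r - 1 \<le> real m" unfolding m_def by linarith+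
  moreover have "birth_time h m \<le> birth_time h K + t"
  proof (cases "nat \<lfloor>r\<rfloor> \<le> K")
    case True
    then show ?thesis using t unfolding m_def by simp
  next
    case False
    then have m: "m = nat \<lfloor>r\<rfloor>" "K \<le> m" unfolding m_def by auto
    have "real m \<le> r" unfolding m(1) r_def by (intro of_nat_floor) simp
    then have "ln (real m) \<le> ln r" using m(2) K by simp
    also have "\<dots> = ln (real K) + (t - \<delta> - 1 / (real K - 1))"
      unfolding r_def using K by (simp add: ln_mult)
    finally have "(\<Sum>j\<in>{K..<m}. 1 / real j) \<le> t - \<delta>"
      using harmonic_sum_le_ln_diff'[OF K m(2)] by linarith
    moreover have "(\<Sum>j\<in>{K..<m}. h j) = (\<Sum>j\<in>{K..<m}. 1 / real j) + (\<Sum>j\<in>{K..<m}. h j - 1 / real j)"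
      by (simp add: sum_subtractf)
    ultimately have "(\<Sum>j\<in>{K..<m}. h j) \<le> t" using dev[OF m(2)] by linarith
    then show ?thesis using birth_time_split[of K m h] K m(2) by simp
  qed
  ultimately show ?thesis using K unfolding r_def born_by_def by auto
qed

section \<open>Types\<close>

definition num_mutants :: "(nat \<Rightarrow> real) \<Rightarrow> nat \<Rightarrow> nat" where
  "num_mutants c m = card {j\<in>{2..m}. c j = 0}"

lemma num_mutants_le: "num_mutants c m \<le> m - 1"
proof -
  have "num_mutants c m \<le> card {2..m}" unfolding num_mutants_def by (intro card_mono) auto
  then show ?thesis by simp
qed

lemma num_mutants_strict_mono:
  assumes "2 \<le> k" "c k = 0" "i < k"
  shows "num_mutants c i < num_mutants c k"
proof -
  have "k \<in> {j\<in>{2..k}. c j = 0}" "k \<notin> {j\<in>{2..i}. c j = 0}"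
    "{j\<in>{2..i}. c j = 0} \<subseteq> {j\<in>{2..k}. c j = 0}" using assms by auto
  then have "{j\<in>{2..i}. c j = 0} \<subset> {j\<in>{2..k}. c j = 0}" by blast
  then show ?thesis unfolding num_mutants_def by (intro psubset_card_mono) auto
qed

lemma num_mutants_eq:
  assumes c01: "\<And>j. 2 \<le> j \<Longrightarrow> c j \<in> {0, 1}" and "1 \<le> m"
  shows "real (num_mutants c m) = real m - 1 - (\<Sum>j\<in>{2..m}. c j)"
proof -
  have "(\<Sum>j\<in>{2..m}. c j) = (\<Sum>j\<in>{2..m}. of_bool (c j \<noteq> 0))"
    using c01 by (intro sum.cong) auto
  also have "\<dots> = real (card {j\<in>{2..m}. c j \<noteq> 0})"
    by (simp add: of_bool_def sum.If_cases Int_def conj_commute)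
  finally have "(\<Sum>j\<in>{2..m}. c j) = real (card {j\<in>{2..m}. c j \<noteq> 0})" .
  moreover have "card {2..m} = card ({j\<in>{2..m}. c j = 0} \<union> {j\<in>{2..m}. c j \<noteq> 0})"
    by (rule arg_cong[where f = card]) auto
  then have "card {2..m} = card {j\<in>{2..m}. c j = 0} + card {j\<in>{2..m}. c j \<noteq> 0}"
    by (simp add: card_Un_disjoint disjoint_iff)
  ultimately show ?thesis using assms(2) unfolding num_mutants_def by simp
qed

lemma type_birth_eq_Inf:
  "i \<noteq> 1 \<Longrightarrow>
    type_birth h c i = Inf {ereal (birth_time h k) |k. 2 \<le> k \<and> c k = 0 \<and> num_mutants c k = i - 1}"
  unfolding type_birth_def num_mutants_def by simp

lemma type_birth_mutant:
  assumes "2 \<le> k" "c k = 0"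
  shows "type_birth h c (num_mutants c k + 1) = ereal (birth_time h k)"
proof -
  have pos: "0 < num_mutants c k"
    using assms unfolding num_mutants_def by (subst card_gt_0_iff) auto
  have unique: "k' = k" if "2 \<le> k'" "c k' = 0" "num_mutants c k' = num_mutants c k" for k'
    using num_mutants_strict_mono[of k c k'] num_mutants_strict_mono[of k' c k] assms that
    by (cases k' k rule: linorder_cases) auto
  have "{ereal (birth_time h k') |k'. 2 \<le> k' \<and> c k' = 0 \<and> num_mutants c k' = num_mutants c k}
      = {ereal (birth_time h k)}"
    using unique assms by auto
  then show ?thesis using pos by (simp add: type_birth_eq_Inf)
qed

lemma type_birth_eq_birth_time:
  assumes "2 \<le> K" "\<And>j. j \<in> {2..K} \<Longrightarrow> c j = 0"
  shows "type_birth h c K = ereal (birth_time h K)"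
proof -
  have "{j\<in>{2..K}. c j = 0} = {2..K}" using assms by auto
  then have "num_mutants c K + 1 = K" using assms unfolding num_mutants_def by simp
  then show ?thesis using type_birth_mutant[of K c h] assms by simp
qed

lemma type_birth_le_obtains_mutant:
  assumes "2 \<le> i" "type_birth h c i \<le> ereal s"
  obtains k where "2 \<le> k" "c k = 0" "num_mutants c k + 1 = i" "birth_time h k \<le> s"
proof -
  let ?S = "{ereal (birth_time h k) |k. 2 \<le> k \<and> c k = 0 \<and> num_mutants c k = i - 1}"
  have "?S \<noteq> {}"
  proof
    assume "?S = {}"
    have "type_birth h c i = Inf ?S" by (rule type_birth_eq_Inf) (use assms(1) in simp)
    then have "type_birth h c i = Inf {}" unfolding \<open>?S = {}\<close> .
    then have "type_birth h c i = \<infinity>" by (simp add: top_ereal_def)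
    then show False using assms(2) by simp
  qed
  then obtain k where k: "2 \<le> k" "c k = 0" "num_mutants c k + 1 = i" using assms by auto
  moreover have "birth_time h k \<le> s"
    using assms(2) type_birth_mutant[of k c h] k by simp
  ultimately show ?thesis using that by blast
qed

lemma types_subset_born_by:
  assumes h0: "\<And>j. 1 \<le> j \<Longrightarrow> 0 \<le> h j" and s: "0 \<le> s" and fin: "finite (born_by h s)"
  shows "{i. 1 \<le> i \<and> type_birth h c i \<le> ereal s} \<subseteq> {1..yule_pop h s}"
proof
  fix i assume "i \<in> {i. 1 \<le> i \<and> type_birth h c i \<le> ereal s}"
  then have i: "1 \<le> i" "type_birth h c i \<le> ereal s" by auto
  have "i \<le> yule_pop h s"
  proof (cases "i = 1")
    case True
    then show ?thesis
      using le_card_born_by[OF h0 fin one_mem_born_by[OF s]] by (simp add: yule_pop_eq_card)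
  next
    case False
    then obtain k where k: "2 \<le> k" "c k = 0" "num_mutants c k + 1 = i" "birth_time h k \<le> s"
      using i type_birth_le_obtains_mutant[of i h c s] by auto
    then have "k \<le> yule_pop h s"
      using le_card_born_by[OF h0 fin] by (simp add: yule_pop_eq_card born_by_def)
    then show ?thesis using num_mutants_le[of c k] k by linarith
  qed
  then show "i \<in> {1..yule_pop h s}" using i by simp
qed

lemma num_types_le_yule_pop:
  assumes "\<And>j. 1 \<le> j \<Longrightarrow> 0 \<le> h j" "0 \<le> s" "finite (born_by h s)"
  shows "num_types h c s \<le> yule_pop h s"
proof -
  have "1 \<in> {i. 1 \<le> i \<and> type_birth h c i \<le> ereal s}"
    using assms(2) by (simp add: type_birth_def)
  then show ?thesis
    using types_subset_born_by[OF assms, of c] unfolding num_types_def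
    by (intro Max.boundedI) (auto intro: finite_subset)
qed

lemma num_mutants_lt_num_types:
  assumes h0: "\<And>j. 1 \<le> j \<Longrightarrow> 0 \<le> h j" and s: "0 \<le> s" and fin: "finite (born_by h s)"
    and k: "k \<in> {2..m}" "c k = 0" and m: "birth_time h m \<le> s"
  shows "num_mutants c m + 1 \<le> num_types h c s"
proof -
  define Q where "Q = {j\<in>{2..m}. c j = 0}"
  have Q: "finite Q" "k \<in> Q" using k unfolding Q_def by auto
  define l where "l = Max Q"
  have l: "l \<in> Q" "\<And>j. j \<in> Q \<Longrightarrow> j \<le> l"
    using Q unfolding l_def by (auto intro: Max_in)
  then have "{j\<in>{2..l}. c j = 0} = Q" unfolding Q_def by auto
  then have "num_mutants c l = num_mutants c m" unfolding num_mutants_def Q_def by simp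
  moreover have "birth_time h l \<le> s"
    using l(1) m by (auto simp: Q_def intro: order_trans[OF birth_time_mono[OF h0]])
  ultimately have "type_birth h c (num_mutants c m + 1) \<le> ereal s"
    using type_birth_mutant[of l c h] l unfolding Q_def by auto
  then show ?thesis
    using types_subset_born_by[OF h0 s fin, of c] unfolding num_types_def
    by (intro Max_ge) (auto intro: finite_subset)
qed

lemma born_by_after_birth_time:
  assumes K: "1 \<le> K" and u: "0 \<le> u" "u \<le> 1/2"
    and dev: "\<And>m. K \<le> m \<Longrightarrow> \<bar>\<Sum>j\<in>{K..<m}. h j - 1 / real j\<bar> < u / 4" and t: "0 \<le> t"
  shows "finite (born_by h (birth_time h K + t))"
    and "real (yule_pop h (birth_time h K + t)) \<le> (1 + u) * real K * exp t"
proof -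
  have dev': "- (u / 4) < (\<Sum>j\<in>{K..<m}. h j - 1 / real j)" if "K \<le> m" for m
    using dev[OF that] unfolding abs_less_iff by linarith
  show "finite (born_by h (birth_time h K + t))"
    using u t by (intro finite_born_by[OF K dev']) auto
  have "real (yule_pop h (birth_time h K + t)) \<le> real K * exp (t + u / 4)"
    using u t by (intro yule_pop_le_exp[OF K dev']) auto
  also have "\<dots> = real K * exp t * exp (u / 4)" by (simp add: exp_add)
  also have "\<dots> \<le> real K * exp t * (1 + u)"
    using exp_quarter_le[OF u] by (intro mult_left_mono) auto
  finally show "real (yule_pop h (birth_time h K + t)) \<le> (1 + u) * real K * exp t"
    by (simp add: mult_ac)
qed

lemma exists_born_after_birth_time:
  assumes K: "8 \<le> K" and u: "4 \<le> real K * u"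
    and dev: "\<And>m. K \<le> m \<Longrightarrow> \<bar>\<Sum>j\<in>{K..<m}. h j - 1 / real j\<bar> < u / 4" and t: "0 \<le> t"
  shows "\<exists>m\<ge>K. m \<in> born_by h (birth_time h K + t) \<and> (1 - u) * real K * exp t \<le> real m"
proof -
  define \<delta> where "\<delta> = u / 4 + 1 / (real K - 1)"
  obtain m where m: "K \<le> m" "m \<in> born_by h (birth_time h K + t)"
    "real K * exp (t - \<delta>) - 1 \<le> real m"
  proof -
    have "(\<Sum>j\<in>{K..<m}. h j - 1 / real j) < u / 4" if "K \<le> m" for m
      using dev[OF that] unfolding abs_less_iff by linarith
    then show ?thesis
      using exists_born_by_ge_exp[of K h "u / 4" t] K t that unfolding \<delta>_def diff_diff_eq by auto
  qed
  have "real K * exp t * (1 - \<delta>) \<le> real K * exp t * exp (- \<delta>)"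
    by (intro mult_left_mono exp_minus_ge) auto
  moreover have "1 \<le> real K * exp t * (u - \<delta>)"
  proof -
    have "real K / (real K - 1) \<le> 8/7" using K by (simp add: field_simps)
    moreover have "real K * (u - \<delta>) = 3/4 * (real K * u) - real K / (real K - 1)"
      unfolding \<delta>_def using K by (simp add: field_simps)
    ultimately have a: "1 \<le> real K * (u - \<delta>)" using u by linarith
    moreover have "real K * (u - \<delta>) \<le> real K * (u - \<delta>) * exp t"
      using a t by (simp add: mult_le_cancel_left1)
    ultimately show ?thesis by (simp add: mult_ac)
  qed
  moreover have "(1 - u) * A \<le> X - 1" if "A * (1 - \<delta>) \<le> X" "1 \<le> A * (u - \<delta>)" for A X :: real
    using that by (simp add: algebra_simps)
  moreover have "real K * exp (t - \<delta>) = real K * exp t * exp (- \<delta>)"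
    by (simp add: exp_diff exp_minus divide_inverse)
  ultimately have "(1 - u) * real K * exp t \<le> real K * exp (t - \<delta>) - 1"
    by (metis mult.assoc)
  then show ?thesis using m by force
qed

lemma yule_pop_num_types_bounds:
  assumes K: "8 \<le> K" and u: "0 < u" "u \<le> 1/2" "4 \<le> real K * u"
    and h0: "\<And>j. 1 \<le> j \<Longrightarrow> 0 \<le> h j" and c01: "\<And>j. 2 \<le> j \<Longrightarrow> c j \<in> {0, 1}"
    and mutants: "\<And>j. j \<in> {2..K} \<Longrightarrow> c j = 0"
    and dev: "\<And>m. K \<le> m \<Longrightarrow> \<bar>\<Sum>j\<in>{K..<m}. h j - 1 / real j\<bar> < u / 4"
    and clones: "\<And>m. K \<le> m \<Longrightarrow> (\<Sum>j\<in>{2..m}. c j) \<le> u * real m"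
    and t: "0 \<le> t"
  defines "s \<equiv> birth_time h K + t"
  shows "(1 - u) * real K * exp t \<le> real (yule_pop h s)"
    and "real (yule_pop h s) \<le> (1 + u) * real K * exp t"
    and "(1 - 3 * u) * real K * exp t \<le> real (num_types h c s)"
    and "real (num_types h c s) \<le> (1 + 3 * u) * real K * exp t"
proof -
  have fin: "finite (born_by h s)" and Z_upper: "real (yule_pop h s) \<le> (1 + u) * real K * exp t"
    using born_by_after_birth_time[OF _ _ _ dev t] K u unfolding s_def by auto
  obtain m where m: "K \<le> m" "m \<in> born_by h s" "(1 - u) * real K * exp t \<le> real m"
    using exists_born_after_birth_time[OF K u(3) dev t] unfolding s_def by blast
  have s: "0 \<le> s"
    using birth_time_mono[OF h0, where i=0 and k=K] t by (simp add: s_def birth_time_def)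
  have "m \<le> yule_pop h s" using le_card_born_by[OF h0 fin m(2)] by (simp add: yule_pop_eq_card)
  then show "(1 - u) * real K * exp t \<le> real (yule_pop h s)" using m(3) by linarith
  show "real (yule_pop h s) \<le> (1 + u) * real K * exp t" by (fact Z_upper)
  have A: "0 \<le> real K * exp t" by simp
  have "real (num_types h c s) \<le> real (yule_pop h s)"
    using num_types_le_yule_pop[OF h0 s fin] by simp
  also have "\<dots> \<le> (1 + u) * (real K * exp t)" using Z_upper by (simp add: mult.assoc)
  also have "\<dots> \<le> (1 + 3 * u) * (real K * exp t)" using u A by (intro mult_right_mono) auto
  finally show "real (num_types h c s) \<le> (1 + 3 * u) * real K * exp t" by (simp add: mult.assoc)
  have "1 - 3 * u \<le> (1 - u) * (1 - u)"
    using mult_nonneg_nonneg[of u u] u by (simp add: algebra_simps)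
  then have "(1 - 3 * u) * (real K * exp t) \<le> (1 - u) * (1 - u) * (real K * exp t)"
    by (rule mult_right_mono[OF _ A])
  also have "\<dots> \<le> (1 - u) * real m"
    using mult_left_mono[OF m(3), of "1 - u"] u by (simp add: mult.assoc)
  also have "\<dots> \<le> real m - 1 - (\<Sum>j\<in>{2..m}. c j) + 1"
    using clones[OF m(1)] by (simp add: algebra_simps)
  also have "\<dots> = real (num_mutants c m + 1)" using num_mutants_eq[OF c01, where m=m] m(1) K by simp
  also have "\<dots> \<le> real (num_types h c s)"
    using num_mutants_lt_num_types[OF h0 s fin, where k=K and m=m and c=c] mutants[of K] m K
    by (simp add: born_by_def)
  finally show "(1 - 3 * u) * real K * exp t \<le> real (num_types h c s)" by (simp add: mult.assoc)
qed

definition yule_path_estimates :: "(nat \<Rightarrow> real) \<Rightarrow> (nat \<Rightarrow> real) \<Rightarrow> nat \<Rightarrow> bool" where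
  "yule_path_estimates h c K \<longleftrightarrow>
     ereal (birth_time h K) = type_birth h c K
   \<and> birth_time h K \<le> (ln (real K))\<^sup>2
   \<and> (\<forall>t\<ge>0. (1 - real K powr (-1/3)) * real K * exp t \<le> real (yule_pop h (birth_time h K + t))
        \<and> real (yule_pop h (birth_time h K + t)) \<le> (1 + real K powr (-1/3)) * real K * exp t)
   \<and> (\<forall>t\<ge>0. (1 - 3 * real K powr (-1/3)) * real K * exp t
          \<le> real (num_types h c (real_of_ereal (type_birth h c K) + t))
        \<and> real (num_types h c (real_of_ereal (type_birth h c K) + t))
          \<le> (1 + 3 * real K powr (-1/3)) * real K * exp t)"

lemma yule_path_estimatesI:
  assumes K: "8 \<le> K"
    and h0: "\<And>j. 1 \<le> j \<Longrightarrow> 0 \<le> h j" and c01: "\<And>j. 2 \<le> j \<Longrightarrow> c j \<in> {0, 1}"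
    and mutants: "\<And>j. j \<in> {2..K} \<Longrightarrow> c j = 0"
    and tau: "birth_time h K \<le> (ln (real K))\<^sup>2"
    and dev: "\<And>m. K \<le> m \<Longrightarrow> \<bar>\<Sum>j\<in>{K..<m}. h j - 1 / real j\<bar> < real K powr (-1/3) / 4"
    and clones: "\<And>m. K \<le> m \<Longrightarrow> (\<Sum>j\<in>{2..m}. c j) \<le> real K powr (-1/3) * real m"
  shows "yule_path_estimates h c K"
proof -
  have "type_birth h c K = ereal (birth_time h K)"
    using K mutants by (intro type_birth_eq_birth_time) auto
  moreover note bounds = yule_pop_num_types_bounds[OF K inverse_cube_root_bounds[OF K] h0 c01 mutants dev clones]
  ultimately show ?thesis using tau unfolding yule_path_estimates_def by simp
qed

section \<open>The random model\<close>

locale clonal_yule_process = prob_space +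
  fixes H C :: "nat \<Rightarrow> 'a \<Rightarrow> real" and p :: real
  assumes p_range: "0 \<le> p" "p \<le> 1"
    and indep: "indep_vars (\<lambda>_. borel) (\<lambda>i. case i of Inl j \<Rightarrow> H j | Inr j \<Rightarrow> C j)
                  (Inl ` {1..} \<union> Inr ` {2..})"
    and hold_exp: "\<And>j. 1 \<le> j \<Longrightarrow> distributed M lborel (H j) (exponential_density (real j))"
    and clone_vals: "\<And>j \<omega>. 2 \<le> j \<Longrightarrow> \<omega> \<in> space M \<Longrightarrow> C j \<omega> \<in> {0, 1}"
    and clone_prob: "\<And>j. 2 \<le> j \<Longrightarrow> prob {\<omega> \<in> space M. C j \<omega> = 1} = p"
begin

text \<open>Outside the index ranges of \<open>H\<close> and \<open>C\<close> the centred variables are set to \<open>0\<close>, so that they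
  are measurable for every index.\<close>

definition centered_hold :: "nat \<Rightarrow> 'a \<Rightarrow> real" where
  "centered_hold j \<omega> = (if 1 \<le> j then H j \<omega> - 1 / real j else 0)"

definition centered_clone :: "nat \<Rightarrow> 'a \<Rightarrow> real" where
  "centered_clone j \<omega> = (if 2 \<le> j then C j \<omega> - p else 0)"

lemma indep_vars_hold: "indep_vars (\<lambda>_. borel) H {1..}"
  using indep_vars_reindex[OF indep_vars_subset[OF indep], of Inl "{1..}"] by (simp add: inj_on_def)

lemma indep_vars_clone: "indep_vars (\<lambda>_. borel) C {2..}"
  using indep_vars_reindex[OF indep_vars_subset[OF indep], of Inr "{2..}"] by (simp add: inj_on_def)

lemma borel_measurable_hold[measurable]: "1 \<le> j \<Longrightarrow> H j \<in> borel_measurable M"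
  using indep_vars_hold unfolding indep_vars_def by simp

lemma borel_measurable_clone[measurable]: "2 \<le> j \<Longrightarrow> C j \<in> borel_measurable M"
  using indep_vars_clone unfolding indep_vars_def by simp

lemma borel_measurable_centered_hold[measurable]: "centered_hold j \<in> borel_measurable M"
  unfolding centered_hold_def by (cases "1 \<le> j") simp_all

lemma borel_measurable_centered_clone[measurable]: "centered_clone j \<in> borel_measurable M"
  unfolding centered_clone_def by (cases "2 \<le> j") simp_all

lemma indep_vars_centered_hold: "indep_vars (\<lambda>_. borel) centered_hold {1..}"
proof -
  have "indep_vars (\<lambda>_. borel) (\<lambda>j \<omega>. (\<lambda>x. x - 1 / real j) (H j \<omega>)) {1..}"
    by (rule indep_vars_compose2[OF indep_vars_hold]) auto
  then show ?thesis
    by (rule indep_vars_cong[THEN iffD1, rotated 3]) (auto simp: centered_hold_def fun_eq_iff)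
qed

lemma indep_vars_centered_clone: "indep_vars (\<lambda>_. borel) centered_clone {2..}"
proof -
  have "indep_vars (\<lambda>_. borel) (\<lambda>j \<omega>. (\<lambda>x. x - p) (C j \<omega>)) {2..}"
    by (rule indep_vars_compose2[OF indep_vars_clone]) auto
  then show ?thesis
    by (rule indep_vars_cong[THEN iffD1, rotated 3]) (auto simp: centered_clone_def fun_eq_iff)
qed

lemma centered_hold_moments:
  assumes j: "1 \<le> j"
  shows "integrable M (\<lambda>\<omega>. centered_hold j \<omega> ^ 2)"
    and "expectation (\<lambda>\<omega>. centered_hold j \<omega> ^ 2) = 1 / (real j)\<^sup>2"
    and "expectation (centered_hold j) = 0"
proof -
  have j_pos: "0 < real j" using j by simp
  note distr = hold_exp[OF j]
  have int1: "integrable M (H j)" and int2: "integrable M (\<lambda>\<omega>. (H j \<omega>)\<^sup>2)"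
    using erlang_ith_moment_integrable[OF j_pos distr, of 1]
      erlang_ith_moment_integrable[OF j_pos distr, of 2] by simp_all
  have mean: "expectation (H j) = 1 / real j"
    using exponential_distributed_expectation[OF j_pos distr] .
  have eq: "centered_hold j = (\<lambda>\<omega>. H j \<omega> - 1 / real j)"
    using j unfolding centered_hold_def by auto
  have "(\<lambda>\<omega>. centered_hold j \<omega> ^ 2) = (\<lambda>\<omega>. (H j \<omega>)\<^sup>2 - 2 * (1 / real j) * H j \<omega> + (1 / real j)\<^sup>2)"
    unfolding eq by (simp add: power2_diff fun_eq_iff)
  then show "integrable M (\<lambda>\<omega>. centered_hold j \<omega> ^ 2)" using int1 int2 by simp
  show "expectation (\<lambda>\<omega>. centered_hold j \<omega> ^ 2) = 1 / (real j)\<^sup>2"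
    unfolding eq using exponential_distributed_variance[OF j_pos distr] mean by simp
  show "expectation (centered_hold j) = 0" unfolding eq using int1 mean by (simp add: prob_space)
qed

lemma centered_clone_moments:
  assumes j: "2 \<le> j"
  shows "integrable M (\<lambda>\<omega>. centered_clone j \<omega> ^ 2)"
    and "expectation (\<lambda>\<omega>. centered_clone j \<omega> ^ 2) \<le> p"
    and "expectation (centered_clone j) = 0"
proof -
  define A where "A = {\<omega> \<in> space M. C j \<omega> = 1}"
  have A_sets: "A \<in> events" unfolding A_def using j by measurable
  have int_A: "integrable M (indicator A :: 'a \<Rightarrow> real)"
    by (rule integrable_real_indicator[OF A_sets]) (simp add: less_top[symmetric])
  have mean_A: "expectation (indicator A :: 'a \<Rightarrow> real) = p"
    using clone_prob[OF j] A_sets unfolding A_def[symmetric]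
    by (simp add: integral_indicator Int_absorb2 sets.sets_into_space)
  have eq: "centered_clone j \<omega> = indicator A \<omega> - p" if "\<omega> \<in> space M" for \<omega>
    using j clone_vals[OF j that] that unfolding centered_clone_def A_def by auto
  have eq2: "centered_clone j \<omega> ^ 2 = (1 - 2 * p) * indicator A \<omega> + p\<^sup>2" if "\<omega> \<in> space M" for \<omega>
    unfolding eq[OF that] by (cases "\<omega> \<in> A") (simp_all add: power2_eq_square algebra_simps)
  have "integrable M (\<lambda>\<omega>. (1 - 2 * p) * indicator A \<omega> + p\<^sup>2)" using int_A by simp
  then show "integrable M (\<lambda>\<omega>. centered_clone j \<omega> ^ 2)"
    by (rule Bochner_Integration.integrable_cong[THEN iffD1, rotated 2]) (auto simp: eq2)
  have "expectation (\<lambda>\<omega>. centered_clone j \<omega> ^ 2) = expectation (\<lambda>\<omega>. (1 - 2 * p) * indicator A \<omega> + p\<^sup>2)"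
    by (rule Bochner_Integration.integral_cong) (auto simp: eq2)
  also have "\<dots> = (1 - 2 * p) * p + p\<^sup>2" using int_A mean_A by (simp add: prob_space)
  also have "\<dots> \<le> p" using p_range by (simp add: power2_eq_square algebra_simps)
  finally show "expectation (\<lambda>\<omega>. centered_clone j \<omega> ^ 2) \<le> p" .
  have "expectation (centered_clone j) = expectation (\<lambda>\<omega>. indicator A \<omega> - p)"
    by (rule Bochner_Integration.integral_cong) (auto simp: eq)
  also have "\<dots> = 0" using int_A mean_A by (simp add: prob_space)
  finally show "expectation (centered_clone j) = 0" .
qed

lemma prob_hold_negative: "prob {\<omega>\<in>space M. \<exists>j\<ge>1. H j \<omega> < 0} = 0"
proof -
  define N where "N j = {\<omega>\<in>space M. 1 \<le> j \<and> H j \<omega> < 0}" for j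
  have N_sets: "N j \<in> events" for j
    unfolding N_def by (cases "1 \<le> j") (simp_all, measurable)
  have null: "prob (N j) = 0" for j
  proof (cases "1 \<le> j")
    case True
    have "prob (N j) \<le> prob {\<omega>\<in>space M. H j \<omega> \<le> 0}"
      using True unfolding N_def by (intro finite_measure_mono) (auto, measurable)
    also have "\<dots> = 0" using exponential_distributedD_le[OF hold_exp[OF True] order.refl] True by simp
    finally show ?thesis using measure_nonneg[of M "N j"] by linarith
  qed (simp add: N_def)
  have "prob (\<Union>j. N j) \<le> (\<Sum>j. prob (N j))"
    using N_sets null by (intro finite_measure_subadditive_countably) auto
  moreover have "{\<omega>\<in>space M. \<exists>j\<ge>1. H j \<omega> < 0} = (\<Union>j. N j)" unfolding N_def by auto
  ultimately show ?thesis using null by (simp add: measure_le_0_iff)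
qed

lemma prob_clone_before:
  assumes "1 \<le> K"
  shows "prob {\<omega>\<in>space M. \<exists>j\<in>{2..K}. C j \<omega> \<noteq> 0} \<le> (real K - 1) * p"
proof -
  have "{\<omega>\<in>space M. \<exists>j\<in>{2..K}. C j \<omega> \<noteq> 0} = (\<Union>j\<in>{2..K}. {\<omega>\<in>space M. C j \<omega> = 1})"
  proof (intro equalityI subsetI)
    fix \<omega> assume "\<omega> \<in> {\<omega>\<in>space M. \<exists>j\<in>{2..K}. C j \<omega> \<noteq> 0}"
    then obtain j where "\<omega> \<in> space M" "j \<in> {2..K}" "C j \<omega> \<noteq> 0" by auto
    then show "\<omega> \<in> (\<Union>j\<in>{2..K}. {\<omega>\<in>space M. C j \<omega> = 1})" using clone_vals[of j \<omega>] by auto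
  qed force
  moreover have "prob (\<Union>j\<in>{2..K}. {\<omega>\<in>space M. C j \<omega> = 1}) \<le> (\<Sum>j\<in>{2..K}. prob {\<omega>\<in>space M. C j \<omega> = 1})"
    by (intro measure_UNION_le) (auto, measurable)
  moreover have "(\<Sum>j\<in>{2..K}. prob {\<omega>\<in>space M. C j \<omega> = 1}) = (real K - 1) * p"
    using clone_prob assms by (simp add: of_nat_diff)
  ultimately show ?thesis by simp
qed

lemma prob_birth_time_large:
  assumes K: "2 \<le> K" and x: "1 + ln (real K) < x"
  shows "prob {\<omega>\<in>space M. x < birth_time (\<lambda>j. H j \<omega>) K} \<le> 2 / (x - 1 - ln (real K))\<^sup>2"
proof -
  define \<epsilon> where "\<epsilon> = x - 1 - ln (real K)"
  have split: "{1..<K} = insert 1 {2..<K}" using K by auto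
  have \<epsilon>: "0 < \<epsilon>" using x unfolding \<epsilon>_def by simp
  have harmonic: "(\<Sum>j\<in>{1..<K}. 1 / real j) \<le> 1 + ln (real K)"
  proof -
    have "(\<Sum>j\<in>{2..<K}. 1 / real j) \<le> ln (real K - 1) - ln (real 2 - 1)"
      by (rule harmonic_sum_le_ln_diff) (use K in auto)
    also have "\<dots> \<le> ln (real K)" using K by simp
    finally show ?thesis unfolding split by simp
  qed
  have "{\<omega>\<in>space M. x < birth_time (\<lambda>j. H j \<omega>) K}
      \<subseteq> {\<omega>\<in>space M. \<exists>m\<in>{1..K}. \<epsilon> \<le> \<bar>\<Sum>j\<in>{1..<m}. centered_hold j \<omega>\<bar>}"
  proof safe
    fix \<omega> assume "\<omega> \<in> space M" "x < birth_time (\<lambda>j. H j \<omega>) K"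
    moreover have "(\<Sum>j\<in>{1..<K}. centered_hold j \<omega>) = birth_time (\<lambda>j. H j \<omega>) K - (\<Sum>j\<in>{1..<K}. 1 / real j)"
      unfolding birth_time_def centered_hold_def by (simp add: sum_subtractf[symmetric])
    ultimately show "\<exists>m\<in>{1..K}. \<epsilon> \<le> \<bar>\<Sum>j\<in>{1..<m}. centered_hold j \<omega>\<bar>"
      using harmonic K unfolding \<epsilon>_def by (intro bexI[of _ K]) auto
  qed
  then have "prob {\<omega>\<in>space M. x < birth_time (\<lambda>j. H j \<omega>) K}
      \<le> prob {\<omega>\<in>space M. \<exists>m\<in>{1..K}. \<epsilon> \<le> \<bar>\<Sum>j\<in>{1..<m}. centered_hold j \<omega>\<bar>}"
    by (intro finite_measure_mono) measurable
  also have "\<dots> \<le> (\<Sum>j\<in>{1..<K}. expectation (\<lambda>\<omega>. centered_hold j \<omega> ^ 2)) / \<epsilon>\<^sup>2"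
    using centered_hold_moments
    by (intro kolmogorov_maximal_inequality[OF indep_vars_centered_hold _ _ _ _ \<epsilon>]) auto
  also have "(\<Sum>j\<in>{1..<K}. expectation (\<lambda>\<omega>. centered_hold j \<omega> ^ 2)) = (\<Sum>j\<in>{1..<K}. 1 / (real j)\<^sup>2)"
    by (intro sum.cong) (auto simp: centered_hold_moments(2))
  also have "(\<Sum>j\<in>{1..<K}. 1 / (real j)\<^sup>2) \<le> 2"
    using inverse_square_sum_le[of 2 K] unfolding split by simp
  finally show ?thesis using \<epsilon> unfolding \<epsilon>_def by (simp add: divide_right_mono)
qed

lemma prob_hold_deviation:
  assumes K: "2 \<le> K" and \<epsilon>: "0 < \<epsilon>"
  shows "prob {\<omega>\<in>space M. \<exists>m\<ge>K. \<epsilon> \<le> \<bar>\<Sum>j\<in>{K..<m}. H j \<omega> - 1 / real j\<bar>}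
    \<le> 1 / ((real K - 1) * \<epsilon>\<^sup>2)"
proof -
  have "(\<Sum>j\<in>{K..<m}. centered_hold j \<omega>) = (\<Sum>j\<in>{K..<m}. H j \<omega> - 1 / real j)" for m \<omega>
    using K by (intro sum.cong) (auto simp: centered_hold_def)
  moreover have "prob {\<omega>\<in>space M. \<exists>m\<ge>K. \<epsilon> \<le> \<bar>\<Sum>j\<in>{K..<m}. centered_hold j \<omega>\<bar>} \<le> (1 / (real K - 1)) / \<epsilon>\<^sup>2"
  proof (rule kolmogorov_maximal_inequality_infinite[OF indep_vars_centered_hold _ _ _ _ \<epsilon>])
    fix b
    have "(\<Sum>j\<in>{K..<b}. expectation (\<lambda>\<omega>. (centered_hold j \<omega>)\<^sup>2)) = (\<Sum>j\<in>{K..<b}. 1 / (real j)\<^sup>2)"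
      using K by (intro sum.cong) (auto simp: centered_hold_moments(2))
    also have "\<dots> \<le> 1 / (real K - 1)" by (rule inverse_square_sum_le[OF K])
    finally show "(\<Sum>j\<in>{K..<b}. expectation (\<lambda>\<omega>. (centered_hold j \<omega>)\<^sup>2)) \<le> 1 / (real K - 1)" .
  qed (use K centered_hold_moments in auto)
  ultimately show ?thesis by simp
qed

lemma prob_clone_count_deviation:
  assumes "0 < \<epsilon>"
  shows "prob {\<omega>\<in>space M. \<exists>m\<in>{2..N + 1}. \<epsilon> \<le> \<bar>\<Sum>j\<in>{2..<m}. centered_clone j \<omega>\<bar>} \<le> real N * p / \<epsilon>\<^sup>2"
proof -
  have "prob {\<omega>\<in>space M. \<exists>m\<in>{2..N + 1}. \<epsilon> \<le> \<bar>\<Sum>j\<in>{2..<m}. centered_clone j \<omega>\<bar>}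
      \<le> (\<Sum>j\<in>{2..<N + 1}. expectation (\<lambda>\<omega>. centered_clone j \<omega> ^ 2)) / \<epsilon>\<^sup>2"
    using centered_clone_moments assms
    by (intro kolmogorov_maximal_inequality[OF indep_vars_centered_clone]) auto
  also have "(\<Sum>j\<in>{2..<N + 1}. expectation (\<lambda>\<omega>. centered_clone j \<omega> ^ 2)) \<le> (\<Sum>j\<in>{2..<N + 1}. p)"
    by (intro sum_mono centered_clone_moments(2)) auto
  also have "\<dots> \<le> real N * p" using p_range by (simp add: mult_right_mono)
  finally show ?thesis by (simp add: divide_right_mono)
qed

lemma prob_many_clones:
  assumes K: "2 \<le> K" and u: "0 < u" "4 * p \<le> u"
  shows "prob {\<omega>\<in>space M. \<exists>m\<ge>K. u * real m < (\<Sum>j\<in>{2..m}. C j \<omega>)} \<le> 16 * p / (u\<^sup>2 * real K)"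
proof -
  \<comment> \<open>Kolmogorov's inequality on the dyadic blocks \<open>[K 2\<^sup>i, K 2\<^sup>i\<^sup>+\<^sup>1)\<close>, with thresholds growing like
    the block length and variances like \<open>p\<close> times it, gives summable bounds \<open>O(p 2\<^sup>-\<^sup>i / (u\<^sup>2 K))\<close>.\<close>
  define \<epsilon> where "\<epsilon> i = u * real K * 2 ^ i / 2" for i :: nat
  define N where "N i = K * 2 ^ (i + 1)" for i :: nat
  define Bad where "Bad i = {\<omega>\<in>space M. \<exists>m\<in>{2..N i + 1}. \<epsilon> i \<le> \<bar>\<Sum>j\<in>{2..<m}. centered_clone j \<omega>\<bar>}" for i
  define c where "c = 8 * p / (u\<^sup>2 * real K)"
  have Bad_sets: "Bad i \<in> events" for i unfolding Bad_def by measurable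
  have prob_Bad: "prob (Bad i) \<le> c * (1/2) ^ i" for i
  proof -
    have "prob (Bad i) \<le> real (N i) * p / (\<epsilon> i)\<^sup>2"
      unfolding Bad_def using u K by (intro prob_clone_count_deviation) (simp add: \<epsilon>_def)
    also have "\<dots> = c * (1/2) ^ i"
      unfolding c_def \<epsilon>_def N_def using u K by (simp add: field_simps power2_eq_square power_one_over)
    finally show ?thesis .
  qed
  have summable: "summable (\<lambda>i. c * (1/2::real) ^ i)" by (intro summable_mult summable_geometric) simp
  have summable_Bad: "summable (\<lambda>i. prob (Bad i))"
    by (rule summable_comparison_test[OF _ summable]) (use prob_Bad in auto)
  have "{\<omega>\<in>space M. \<exists>m\<ge>K. u * real m < (\<Sum>j\<in>{2..m}. C j \<omega>)} \<subseteq> (\<Union>i. Bad i)"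
  proof safe
    fix \<omega> m assume \<omega>: "\<omega> \<in> space M" and m: "K \<le> m" "u * real m < (\<Sum>j\<in>{2..m}. C j \<omega>)"
    obtain i where i: "\<epsilon> i \<le> \<bar>\<Sum>j\<in>{2..N i}. C j \<omega> - p\<bar>"
      using dyadic_block_excess[of "\<lambda>j. C j \<omega>" p u K m] clone_vals[OF _ \<omega>] p_range u K m
      unfolding \<epsilon>_def N_def by force
    moreover have "(\<Sum>j\<in>{2..<N i + 1}. centered_clone j \<omega>) = (\<Sum>j\<in>{2..N i}. C j \<omega> - p)"
      by (intro sum.cong) (auto simp: centered_clone_def)
    moreover have "N i + 1 \<in> {2..N i + 1}" using K unfolding N_def by simp
    ultimately have "\<exists>m\<in>{2..N i + 1}. \<epsilon> i \<le> \<bar>\<Sum>j\<in>{2..<m}. centered_clone j \<omega>\<bar>" by metis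
    then show "\<omega> \<in> (\<Union>i. Bad i)" unfolding Bad_def using \<omega> by blast
  qed
  then have "prob {\<omega>\<in>space M. \<exists>m\<ge>K. u * real m < (\<Sum>j\<in>{2..m}. C j \<omega>)} \<le> prob (\<Union>i. Bad i)"
    using Bad_sets by (intro finite_measure_mono) auto
  also have "\<dots> \<le> (\<Sum>i. prob (Bad i))"
    using Bad_sets summable_Bad by (intro finite_measure_subadditive_countably) auto
  also have "\<dots> \<le> (\<Sum>i. c * (1/2) ^ i)"
    using prob_Bad summable summable_Bad by (intro suminf_le) auto
  also have "\<dots> = 16 * p / (u\<^sup>2 * real K)"
  proof -
    have "(\<Sum>i. c * (1/2::real) ^ i) = c * (\<Sum>i. (1/2::real) ^ i)"
      by (rule suminf_mult) (rule summable_geometric, simp)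
    then show ?thesis using suminf_geometric[of "1/2::real"] unfolding c_def by simp
  qed
  finally show ?thesis .
qed

lemma borel_measurable_hold_deviation:
  assumes "1 \<le> K"
  shows "(\<lambda>\<omega>. \<Sum>j\<in>{K..<m}. H j \<omega> - 1 / real j) \<in> borel_measurable M"
proof -
  have "(\<lambda>\<omega>. \<Sum>j\<in>{K..<m}. H j \<omega> - 1 / real j) = (\<lambda>\<omega>. \<Sum>j\<in>{K..<m}. centered_hold j \<omega>)"
    using assms by (intro ext sum.cong) (auto simp: centered_hold_def)
  then show ?thesis by simp
qed

definition typical_event :: "nat \<Rightarrow> 'a set" where
  "typical_event K = {\<omega>\<in>space M. (\<forall>j\<ge>1. 0 \<le> H j \<omega>) \<and> (\<forall>j\<in>{2..K}. C j \<omega> = 0)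
     \<and> birth_time (\<lambda>j. H j \<omega>) K \<le> (ln (real K))\<^sup>2
     \<and> (\<forall>m\<ge>K. \<bar>\<Sum>j\<in>{K..<m}. H j \<omega> - 1 / real j\<bar> < real K powr (-1/3) / 4)
     \<and> (\<forall>m\<ge>K. (\<Sum>j\<in>{2..m}. C j \<omega>) \<le> real K powr (-1/3) * real m)}"

lemma typical_event_sets:
  assumes "1 \<le> K"
  shows "typical_event K \<in> events"
proof -
  have [measurable]: "(\<lambda>\<omega>. \<Sum>j\<in>{K..<m}. H j \<omega> - 1 / real j) \<in> borel_measurable M" for m
    using borel_measurable_hold_deviation[OF assms] .
  show ?thesis unfolding typical_event_def birth_time_def by measurable
qed

lemma yule_path_estimates_typical_event:
  assumes "8 \<le> K" and "\<omega> \<in> typical_event K"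
  shows "yule_path_estimates (\<lambda>j. H j \<omega>) (\<lambda>j. C j \<omega>) K"
  using assms clone_vals unfolding typical_event_def by (intro yule_path_estimatesI) auto

lemma prob_typical_event:
  assumes K: "8 \<le> K" "3 \<le> ln (real K)" and Kp: "real K * p \<le> 1/4"
  shows "1 - (real K * p + 2 / (ln (real K))\<^sup>2 + 32 * real K powr (-1/3) + 8 * p) \<le> prob (typical_event K)"
proof -
  define u where "u = real K powr (-1/3)"
  note u = inverse_cube_root_bounds[OF K(1), folded u_def]
    inverse_cube_root_tail_bounds[OF K(1), folded u_def]
  define B0 where "B0 = {\<omega>\<in>space M. \<exists>j\<ge>1. H j \<omega> < 0}"
  define B1 where "B1 = {\<omega>\<in>space M. \<exists>j\<in>{2..K}. C j \<omega> \<noteq> 0}"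
  define B2 where "B2 = {\<omega>\<in>space M. (ln (real K))\<^sup>2 < birth_time (\<lambda>j. H j \<omega>) K}"
  define B3 where "B3 = {\<omega>\<in>space M. \<exists>m\<ge>K. u / 4 \<le> \<bar>\<Sum>j\<in>{K..<m}. H j \<omega> - 1 / real j\<bar>}"
  define B4 where "B4 = {\<omega>\<in>space M. \<exists>m\<ge>K. u * real m < (\<Sum>j\<in>{2..m}. C j \<omega>)}"
  have [measurable]: "(\<lambda>\<omega>. \<Sum>j\<in>{K..<m}. H j \<omega> - 1 / real j) \<in> borel_measurable M" for m
    using borel_measurable_hold_deviation K(1) by simp
  have B_sets: "B0 \<in> events" "B1 \<in> events" "B2 \<in> events" "B3 \<in> events" "B4 \<in> events"
    unfolding B0_def B1_def B2_def B3_def B4_def birth_time_def by measurable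
  have "prob B1 \<le> (real K - 1) * p" using prob_clone_before[of K] K unfolding B1_def by simp
  then have p1: "prob B1 \<le> real K * p" using p_range by (simp add: algebra_simps)
  have p2: "prob B2 \<le> 2 / (ln (real K))\<^sup>2"
    using prob_birth_time_large[of K "(ln (real K))\<^sup>2"] ln_square_bound[OF K(2)] K(1)
    unfolding B2_def by simp
  have p3: "prob B3 \<le> 32 * u"
    using prob_hold_deviation[of K "u / 4"] u K(1) unfolding B3_def by simp
  have "4 * p \<le> 1 / real K" using Kp K(1) by (simp add: field_simps)
  then have "prob B4 \<le> 16 * p / (u\<^sup>2 * real K)"
    using prob_many_clones[of K u] u K(1) unfolding B4_def by simp
  also have "\<dots> = 16 * p * u" using u by simp
  also have "\<dots> \<le> 16 * p * (1/2)" using u p_range by (intro mult_left_mono) auto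
  finally have p4: "prob B4 \<le> 8 * p" by simp
  have "space M - typical_event K \<subseteq> B0 \<union> B1 \<union> B2 \<union> B3 \<union> B4"
    unfolding typical_event_def B0_def B1_def B2_def B3_def B4_def u_def by (auto simp: not_less not_le)
  then have "prob (space M - typical_event K) \<le> prob (B0 \<union> B1 \<union> B2 \<union> B3 \<union> B4)"
    using B_sets by (intro finite_measure_mono) auto
  also have "\<dots> \<le> prob B0 + prob B1 + prob B2 + prob B3 + prob B4"
    using B_sets by (intro order_trans[OF measure_Un_le] add_mono) auto
  finally show ?thesis
    using p1 p2 p3 p4 prob_hold_negative prob_compl[OF typical_event_sets] K(1)
    unfolding B0_def u_def by simp
qed

end

lemma typical_bound_tendsto_zero:
  fixes k :: "nat \<Rightarrow> nat" and p :: "nat \<Rightarrow> real"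
  assumes k: "filterlim k at_top sequentially" and "p \<longlonglongrightarrow> 0" "(\<lambda>n. real (k n) * p n) \<longlonglongrightarrow> 0"
  shows "(\<lambda>n. real (k n) * p n + 2 / (ln (real (k n)))\<^sup>2 + 32 * real (k n) powr (-1/3) + 8 * p n)
    \<longlonglongrightarrow> 0"
proof -
  have k_real: "filterlim (\<lambda>n. real (k n)) at_top sequentially"
    by (rule filterlim_compose[OF filterlim_real_sequentially k])
  have "(\<lambda>n. 2 / (ln (real (k n)))\<^sup>2) \<longlonglongrightarrow> 0"
    by (intro tendsto_divide_0[OF tendsto_const] filterlim_at_top_imp_at_infinity
        filterlim_pow_at_top[OF _ filterlim_compose[OF ln_at_top k_real]]) simp
  moreover have "(\<lambda>n. real (k n) powr (-1/3)) \<longlonglongrightarrow> 0" by (rule tendsto_neg_powr[OF _ k_real]) simp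
  ultimately have "(\<lambda>n. real (k n) * p n + 2 / (ln (real (k n)))\<^sup>2 + 32 * real (k n) powr (-1/3) + 8 * p n)
    \<longlonglongrightarrow> 0 + 0 + 32 * 0 + 8 * 0"
    by (intro tendsto_add tendsto_mult tendsto_const assms)
  then show ?thesis by simp
qed

lemma exists_events_measure_tendsto_1:
  assumes prob: "\<And>n. prob_space (M n)"
    and ev: "eventually (\<lambda>n. \<exists>E\<in>sets (M n). (\<forall>\<omega>\<in>E. P n \<omega>) \<and> 1 - b n \<le> measure (M n) E) sequentially"
    and b: "b \<longlonglongrightarrow> 0"
  shows "\<exists>E. (\<forall>n. E n \<in> sets (M n)) \<and> (\<lambda>n. measure (M n) (E n)) \<longlonglongrightarrow> 1 \<and> (\<forall>n. \<forall>\<omega>\<in>E n. P n \<omega>)"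
proof -
  define Q where "Q n E \<longleftrightarrow> E \<in> sets (M n) \<and> (\<forall>\<omega>\<in>E. P n \<omega>) \<and> 1 - b n \<le> measure (M n) E" for n E
  define E where "E n = (if \<exists>E. Q n E then SOME E. Q n E else {})" for n
  have Q_E: "Q n (E n)" if "\<exists>E. Q n E" for n
    using that someI_ex[OF that] unfolding E_def by simp
  have E: "E n \<in> sets (M n) \<and> (\<forall>\<omega>\<in>E n. P n \<omega>)" for n
  proof (cases "\<exists>E. Q n E")
    case True
    then show ?thesis using Q_E[OF True] unfolding Q_def by blast
  qed (simp add: E_def)
  have "eventually (\<lambda>n. 1 - b n \<le> measure (M n) (E n)) sequentially"
    using ev by (rule eventually_mono) (use Q_E in \<open>auto simp: Q_def\<close>)
  then have "(\<lambda>n. measure (M n) (E n)) \<longlonglongrightarrow> 1"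
  proof (rule tendsto_sandwich[of "\<lambda>n. 1 - b n" _ sequentially "\<lambda>n. 1"])
    show "eventually (\<lambda>n. measure (M n) (E n) \<le> 1) sequentially"
      by (intro always_eventually allI prob_space.prob_le_1[OF prob])
    show "(\<lambda>n. 1 - b n) \<longlonglongrightarrow> 1" using tendsto_diff[OF tendsto_const b, of 1] by simp
  qed simp
  then show ?thesis using E by blast
qed

theorem lemma3p1:
  fixes M :: "nat \<Rightarrow> 'a measure"
    and H :: "nat \<Rightarrow> nat \<Rightarrow> 'a \<Rightarrow> real"
    and C :: "nat \<Rightarrow> nat \<Rightarrow> 'a \<Rightarrow> real"
    and p :: "nat \<Rightarrow> real" and k :: "nat \<Rightarrow> nat"
  assumes p_range: "\<And>n. 0 \<le> p n \<and> p n \<le> 1"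
    and p_lim: "p \<longlonglongrightarrow> 0"
    and k_lim: "filterlim k at_top sequentially"
    and kp_lim: "(\<lambda>n. real (k n) * p n) \<longlonglongrightarrow> 0"
    and prob: "\<And>n. prob_space (M n)"
    and indep: "\<And>n. prob_space.indep_vars (M n) (\<lambda>_. borel)
                  (\<lambda>i. case i of Inl j \<Rightarrow> H n j | Inr j \<Rightarrow> C n j)
                  (Inl ` {1..} \<union> Inr ` {2..})"
    and hold_exp: "\<And>n j. 1 \<le> j \<Longrightarrow>
                  distributed (M n) lborel (H n j) (exponential_density (real j))"
    and clone_vals: "\<And>n j \<omega>. 2 \<le> j \<Longrightarrow> \<omega> \<in> space (M n) \<Longrightarrow> C n j \<omega> \<in> {0, 1}"
    and clone_prob: "\<And>n j. 2 \<le> j \<Longrightarrow>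
                  measure (M n) {\<omega> \<in> space (M n). C n j \<omega> = 1} = p n"
  shows "\<exists>E. (\<forall>n. E n \<in> sets (M n))
           \<and> (\<lambda>n. measure (M n) (E n)) \<longlonglongrightarrow> 1
           \<and> (\<forall>n. \<forall>\<omega>\<in>E n.
                 ereal (birth_time (\<lambda>j. H n j \<omega>) (k n)) = type_birth (\<lambda>j. H n j \<omega>) (\<lambda>j. C n j \<omega>) (k n)
               \<and> birth_time (\<lambda>j. H n j \<omega>) (k n) \<le> (ln (real (k n)))\<^sup>2
               \<and> (\<forall>t\<ge>0.
                    (1 - real (k n) powr (-1/3)) * real (k n) * exp t
                      \<le> real (yule_pop (\<lambda>j. H n j \<omega>) (birth_time (\<lambda>j. H n j \<omega>) (k n) + t))
                  \<and> real (yule_pop (\<lambda>j. H n j \<omega>) (birth_time (\<lambda>j. H n j \<omega>) (k n) + t))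
                      \<le> (1 + real (k n) powr (-1/3)) * real (k n) * exp t)
               \<and> (\<forall>t\<ge>0.
                    (1 - 3 * real (k n) powr (-1/3)) * real (k n) * exp t
                      \<le> real (num_types (\<lambda>j. H n j \<omega>) (\<lambda>j. C n j \<omega>)
                               (real_of_ereal (type_birth (\<lambda>j. H n j \<omega>) (\<lambda>j. C n j \<omega>) (k n)) + t))
                  \<and> real (num_types (\<lambda>j. H n j \<omega>) (\<lambda>j. C n j \<omega>)
                               (real_of_ereal (type_birth (\<lambda>j. H n j \<omega>) (\<lambda>j. C n j \<omega>) (k n)) + t))
                      \<le> (1 + 3 * real (k n) powr (-1/3)) * real (k n) * exp t))"
proof -
  define b where "b n = real (k n) * p n + 2 / (ln (real (k n)))\<^sup>2 + 32 * real (k n) powr (-1/3) + 8 * p n" for n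
  have "eventually (\<lambda>n. 8 \<le> k n) sequentially"
    "eventually (\<lambda>n. 3 \<le> ln (real (k n))) sequentially"
    using k_lim filterlim_compose[OF ln_at_top filterlim_compose[OF filterlim_real_sequentially k_lim]]
    unfolding filterlim_at_top by blast+
  then have "eventually (\<lambda>n. 8 \<le> k n \<and> 3 \<le> ln (real (k n)) \<and> real (k n) * p n < 1/4) sequentially"
    using order_tendstoD(2)[OF kp_lim, of "1/4"] by (intro eventually_conj) auto
  then have "eventually (\<lambda>n. \<exists>E\<in>sets (M n). (\<forall>\<omega>\<in>E. yule_path_estimates (\<lambda>j. H n j \<omega>) (\<lambda>j. C n j \<omega>) (k n))
      \<and> 1 - b n \<le> measure (M n) E) sequentially"
  proof (rule eventually_mono)
    fix n assume n: "8 \<le> k n \<and> 3 \<le> ln (real (k n)) \<and> real (k n) * p n < 1/4"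
    interpret clonal_yule_process "M n" "H n" "C n" "p n"
      by (intro clonal_yule_process.intro clonal_yule_process_axioms.intro prob)
        (use p_range indep hold_exp clone_vals clone_prob in auto)
    show "\<exists>E\<in>sets (M n). (\<forall>\<omega>\<in>E. yule_path_estimates (\<lambda>j. H n j \<omega>) (\<lambda>j. C n j \<omega>) (k n))
      \<and> 1 - b n \<le> measure (M n) E"
      using typical_event_sets yule_path_estimates_typical_event prob_typical_event[of "k n"] n
      unfolding b_def by (intro bexI[of _ "typical_event (k n)"]) auto
  qed
  moreover have "b \<longlonglongrightarrow> 0" unfolding b_def using typical_bound_tendsto_zero[OF k_lim p_lim kp_lim] .
  ultimately have "\<exists>E. (\<forall>n. E n \<in> sets (M n)) \<and> (\<lambda>n. measure (M n) (E n)) \<longlonglongrightarrow> 1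
      \<and> (\<forall>n. \<forall>\<omega>\<in>E n. yule_path_estimates (\<lambda>j. H n j \<omega>) (\<lambda>j. C n j \<omega>) (k n))"
    by (rule exists_events_measure_tendsto_1[OF prob])
  then show ?thesis unfolding yule_path_estimates_def .
qed

end
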